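(* Let $\Gamma=(V,E,w)$ be a directed network with walk matrix $W$, and let $a_1,\dots,a_k\in V$ and $b_1,\dots,b_k\in V$ be such that for all $i<i'$ and $j'<j$, every walk from $a_i$ to $b_j$ has a vertex in common with every walk from $a_{i'}$ to $b_{j'}$. Let $W_{A,B}=(W(a_i,b_j))_{i,j=1}^k$. Then, as formal power series, $$\det(W_{A,B})=\sum w(\pi_1)\cdots w(\pi_k),$$ where the sum runs over all families of walks $\pi_i$ from $a_i$ to $b_i$ ($i=1,\dots,k$) such that for every $1\le i<k$ the walk $\pi_{i+1}$ has no vertex in common with $\mathrm{LE}(\pi_i)$. In particular, if the edge weights are specialized to nonnegative reals (with all the series involved convergent), then the matrix $W_{A,B}$ is totally nonnegative.
   Context: A directed network $\Gamma=(V,E,w)$ is a directed graph with vertex set $V$ and edge set $E$ (loops and multiple edges allowed) together with a family of commuting formal variables $\{w(e)\}_{e\in E}$. A walk $\pi$ of length $m$ from $a$ to $b$ is a sequence $a=a_0\xrightarrow{e_1}a_1\xrightarrow{e_2}\cdots\xrightarrow{e_m}a_m=b$ with each $e_i$ an edge from $a_{i-1}$ to $a_i$; its weight is $w(\pi)=\prod_i w(e_i)$, the length-$0$ walk having weight $1$. It is assumed that between any two vertices there are at most countably many walks of each fixed length, so that $W(a,b)=\sum_{\pi:a\to b}w(\pi)$ (sum over all walks from $a$ to $b$) is a well-defined formal power series; $W=(W(a,b))_{a,b\in V}$ is the walk matrix. Loop erasure: if all vertices $a_0,\dots,a_m$ of $\pi$ are distinct, $\mathrm{LE}(\pi)=\pi$;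 otherwise take $a_i=a_j$ ($i<j$) with $j$ as small as possible, delete the segment $a_i\xrightarrow{e_{i+1}}\cdots\xrightarrow{e_j}a_j$ from $\pi$ to obtain $\pi'$, and set $\mathrm{LE}(\pi)=\mathrm{LE}(\pi')$. A matrix is totally nonnegative if all its minors are nonnegative. *)

theory Defs
  imports "HOL-Library.Multiset" "HOL-Analysis.Infinite_Sum"
    "Jordan_Normal_Form.Determinant" "Jordan_Normal_Form.DL_Submatrix"
begin

text \<open>A formal power series in the commuting variables w(e), e an edge, is a function
  from monomials (finite multisets of edges) to integer coefficients.  Multiplication
  is the Cauchy product.\<close>

datatype 'e mfps = MFPS (coeff: "'e multiset \<Rightarrow> int")

lemma mfps_eqI: "(\<And>m. coeff f m = coeff g m) \<Longrightarrow> f = g"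
  by (cases f; cases g) auto

lemma finite_submsets: "finite {x. x \<subseteq># (m::'a multiset)}"
proof -
  have "{x. x \<subseteq># m} \<subseteq> mset ` {xs. set xs \<subseteq> set_mset m \<and> length xs \<le> size m}"
  proof
    fix x assume "x \<in> {x. x \<subseteq># m}"
    hence x: "x \<subseteq># m" by simp
    obtain xs where xs: "mset xs = x" using ex_mset by blast
    have "set xs \<subseteq> set_mset m" using x xs set_mset_mono by fastforce
    moreover have "length xs \<le> size m" using x xs size_mset_mono by fastforce
    ultimately show "x \<in> mset ` {xs. set xs \<subseteq> set_mset m \<and> length xs \<le> size m}"
      using xs by blast
  qed
  moreover have "finite {xs. set xs \<subseteq> set_mset m \<and> length xs \<le> size m}"
    by (rule finite_lists_length_le) simp
  ultimately show ?thesis by (meson finite_surj)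
qed

instantiation mfps :: (type) comm_ring_1
begin
definition "0 = MFPS (\<lambda>_. 0)"
definition "1 = MFPS (\<lambda>m. if m = {#} then 1 else 0)"
definition "f + g = MFPS (\<lambda>m. coeff f m + coeff g m)"
definition "f - g = MFPS (\<lambda>m. coeff f m - coeff g m)"
definition "- f = MFPS (\<lambda>m. - coeff f m)"
definition "f * g = MFPS (\<lambda>m. \<Sum>x\<in>{x. x \<subseteq># m}. coeff f x * coeff g (m - x))"

lemma coeff_mult: "coeff (f * g) m = (\<Sum>x\<in>{x. x \<subseteq># m}. coeff f x * coeff g (m - x))"
  by (simp add: times_mfps_def)

lemma mult_comm_aux: "(f::'a mfps) * g = g * f"
proof (rule mfps_eqI)
  fix m
  show "coeff (f * g) m = coeff (g * f) m"
    unfolding coeff_mult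
    by (rule sum.reindex_bij_witness[where i="\<lambda>x. m - x" and j="\<lambda>x. m - x"])
       (auto simp: subset_mset.diff_diff_right mult.commute)
qed

lemma mult_assoc_aux: "((f::'a mfps) * g) * h = f * (g * h)"
proof (rule mfps_eqI)
  fix m
  have "coeff ((f * g) * h) m =
      (\<Sum>(z,x)\<in>(SIGMA z:{z. z \<subseteq># m}. {x. x \<subseteq># z}). coeff f x * coeff g (z - x) * coeff h (m - z))"
    unfolding coeff_mult sum_distrib_right
    by (subst sum.Sigma) (auto simp: finite_submsets)
  also have "\<dots> = (\<Sum>(x,y)\<in>(SIGMA x:{x. x \<subseteq># m}. {y. y \<subseteq># m - x}). coeff f x * (coeff g y * coeff h (m - x - y)))"
  proof (rule sum.reindex_bij_witness[where i="\<lambda>(x,y). (x + y, x)" and j="\<lambda>(z,x). (x, z - x)"])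
    fix p assume p: "p \<in> (SIGMA x:{x. x \<subseteq># m}. {y. y \<subseteq># m - x})"
    obtain x y where pe: "p = (x,y)" by (cases p)
    from p pe have xm: "x \<subseteq># m" and ym: "y \<subseteq># m - x" by auto
    have xym: "x + y \<subseteq># m" using xm ym by (simp add: add.commute subset_mset.le_diff_conv2)
    show "(case (case p of (x, y) \<Rightarrow> (x + y, x)) of (z, x) \<Rightarrow> (x, z - x)) = p"
      using pe by simp
    show "(case p of (x, y) \<Rightarrow> (x + y, x)) \<in> (SIGMA z:{z. z \<subseteq># m}. {x. x \<subseteq># z})"
      using pe xym by simp
  next
    fix p assume p: "p \<in> (SIGMA z:{z. z \<subseteq># m}. {x. x \<subseteq># z})"
    obtain z x where pe: "p = (z,x)" by (cases p)
    from p pe have zm: "z \<subseteq># m" and xz: "x \<subseteq># z" by auto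
    have "z - x \<subseteq># m - x" using zm xz using subset_eq_diff_conv by fastforce
    moreover have "x \<subseteq># m" using xz zm by (rule subset_mset.order_trans)
    ultimately show "(case p of (z, x) \<Rightarrow> (x, z - x)) \<in> (SIGMA x:{x. x \<subseteq># m}. {y. y \<subseteq># m - x})"
      using pe by simp
    show "(case (case p of (z, x) \<Rightarrow> (x, z - x)) of (x, y) \<Rightarrow> (x + y, x)) = p"
      using pe xz by (simp add: subset_mset.add_diff_inverse)
    show "(case (case p of (z, x) \<Rightarrow> (x, z - x)) of (x, y) \<Rightarrow> coeff f x * (coeff g y * coeff h (m - x - y))) =
         (case p of (z, x) \<Rightarrow> coeff f x * coeff g (z - x) * coeff h (m - z))"
      using pe xz by (simp add: diff_diff_add subset_mset.add_diff_inverse mult.assoc)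
  qed
  also have "\<dots> = coeff (f * (g * h)) m"
    unfolding coeff_mult sum_distrib_left
    by (subst sum.Sigma) (auto simp: finite_submsets)
  finally show "coeff ((f * g) * h) m = coeff (f * (g * h)) m" .
qed

instance
proof
  fix f g h :: "'a mfps"
  show "f * g * h = f * (g * h)" by (rule mult_assoc_aux)
  show "f * g = g * f" by (rule mult_comm_aux)
  show "1 * f = f"
  proof (rule mfps_eqI)
    fix m
    have "coeff (1 * f) m = (\<Sum>x\<in>{x. x \<subseteq># m}. if x = {#} then coeff f (m - x) else 0)"
      unfolding coeff_mult by (rule sum.cong) (auto simp: one_mfps_def)
    also have "\<dots> = coeff f m" by (simp add: sum.delta finite_submsets)
    finally show "coeff (1 * f) m = coeff f m" .
  qed
  show "(f + g) * h = f * h + g * h"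
    by (rule mfps_eqI) (simp add: coeff_mult plus_mfps_def distrib_right sum.distrib)
qed (auto intro!: mfps_eqI dest: fun_cong[where x="{#}"] simp: zero_mfps_def one_mfps_def plus_mfps_def minus_mfps_def
        uminus_mfps_def)
end

text \<open>The formal sum of the monomials @ X^(mu p)@, p ranging over a set S
  (each monomial occurs with coefficient the number of p with that monomial).\<close>

definition mono_sum :: "'p set \<Rightarrow> ('p \<Rightarrow> 'e multiset) \<Rightarrow> 'e mfps" where
  "mono_sum S \<mu> = MFPS (\<lambda>m. int (card {p \<in> S. \<mu> p = m}))"

text \<open>A directed network is given by source and target maps of the edges; the edge
  weights are the formal variables w(e).  A walk is a start vertex together with the list
  of its steps (edge, vertex reached).\<close>

type_synonym ('v, 'e) walk = "'v \<times> ('e \<times> 'v) list"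

fun steps_ok :: "('e \<Rightarrow> 'v) \<Rightarrow> ('e \<Rightarrow> 'v) \<Rightarrow> 'v \<Rightarrow> ('e \<times> 'v) list \<Rightarrow> bool" where
  "steps_ok src tgt v [] = True"
| "steps_ok src tgt v ((e, u) # st) = (src e = v \<and> tgt e = u \<and> steps_ok src tgt u st)"

definition walk_verts :: "('v, 'e) walk \<Rightarrow> 'v list" where
  "walk_verts p = fst p # map snd (snd p)"

definition is_walk :: "('e \<Rightarrow> 'v) \<Rightarrow> ('e \<Rightarrow> 'v) \<Rightarrow> 'v \<Rightarrow> 'v \<Rightarrow> ('v, 'e) walk \<Rightarrow> bool" where
  "is_walk src tgt x y p \<longleftrightarrow> fst p = x \<and> last (walk_verts p) = y \<and> steps_ok src tgt (fst p) (snd p)"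

definition wmon :: "('v, 'e) walk \<Rightarrow> 'e multiset" where
  "wmon p = mset (map fst (snd p))"

definition walk_series :: "('e \<Rightarrow> 'v) \<Rightarrow> ('e \<Rightarrow> 'v) \<Rightarrow> 'v \<Rightarrow> 'v \<Rightarrow> 'e mfps" where
  "walk_series src tgt x y = mono_sum {p. is_walk src tgt x y p} wmon"

function LE :: "('v, 'e) walk \<Rightarrow> ('v, 'e) walk" where
  "LE (a, st) =
    (if distinct (a # map snd st) then (a, st)
     else (let vs = a # map snd st;
               j = (LEAST j. \<exists>i<j. vs ! i = vs ! j);
               i = (LEAST i. i < j \<and> vs ! i = vs ! j)
           in LE (a, take i st @ drop j st)))"
  by pat_completeness auto
termination
proof (relation "measure (\<lambda>(a, st). length st)")
  show "wf (measure (\<lambda>(a, st). length st))" by simp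
next
  fix a :: 'v and st :: "('e \<times> 'v) list" and vs j i
  assume nd: "\<not> distinct (a # map snd st)" and vs: "vs = a # map snd st"
    and j: "j = (LEAST j. \<exists>i<j. vs ! i = vs ! j)" and i: "i = (LEAST i. i < j \<and> vs ! i = vs ! j)"
  from nd vs obtain i1 j1 where ij1: "i1 < length vs" "j1 < length vs" "i1 \<noteq> j1" "vs ! i1 = vs ! j1"
    by (auto simp only: distinct_conv_nth)
  define i0 where "i0 = min i1 j1"
  define j0 where "j0 = max i1 j1"
  have ij0: "i0 < j0" "j0 < length vs" "vs ! i0 = vs ! j0"
    using ij1 by (auto simp: i0_def j0_def min_def max_def)
  hence ex: "\<exists>i<j0. vs ! i = vs ! j0" by blast
  have "j \<le> j0" unfolding j by (rule Least_le) (rule ex)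
  have "\<exists>i<j. vs ! i = vs ! j" unfolding j by (rule LeastI) (rule ex)
  hence "i < j \<and> vs ! i = vs ! j" unfolding i by (metis (mono_tags, lifting) LeastI)
  with \<open>j \<le> j0\<close> ij0 vs show "((a, take i st @ drop j st), (a, st)) \<in> measure (\<lambda>(a, st). length st)"
    by auto
qed

definition walk_rweight :: "('e \<Rightarrow> real) \<Rightarrow> ('v, 'e) walk \<Rightarrow> real" where
  "walk_rweight r p = prod_list (map (r \<circ> fst) (snd p))"

definition totally_nonneg :: "real mat \<Rightarrow> bool" where
  "totally_nonneg M \<longleftrightarrow>
     (\<forall>I J. I \<subseteq> {..<dim_row M} \<longrightarrow> J \<subseteq> {..<dim_col M} \<longrightarrow> card I = card J \<longrightarrow>
        det (submatrix M I J) \<ge> 0)"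

end

theory Submission
  imports Defs "HOL-Library.Disjoint_Sets"
begin

(* Expanding det W_{A,B} by the Leibniz formula and multiplying out the walk series, the
   determinant becomes a signed sum over pairs (sigma, f) of a permutation and a family of walks
   f i from a_i to b_(sigma i), each weighted by the product of its edges.  Fomin's involution
   cancels every pair with a conflict, i.e. a later walk f j meeting LE (f i): exchanging the
   tails of f i and f j after their last visits to a suitably chosen common vertex preserves the
   monomial, composes sigma with a transposition, and is its own inverse because the part of
   LE (f i) before that vertex is unchanged.  By the crossing hypothesis a conflict-free family
   has sigma = id, and then being conflict-free means that each f (i + 1) avoids LE (f i).  For
   nonnegative real weights the same cancellation, applied to every square submatrix (whose rows
   and columns inherit the crossing hypothesis), leaves a sum of nonnegative terms. *)

section \<open>Loop erasure as a left fold\<close>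

text \<open>The loop erasure is computed chronologically: a step returning to a vertex of the path
  erased so far cuts that path back to the vertex.  LE_eq_loop_erase shows that this agrees with
  LE, which erases the earliest closed loop first.\<close>

fun cut_at :: "'v \<Rightarrow> ('e \<times> 'v) list \<Rightarrow> ('e \<times> 'v) list" where
  "cut_at u [] = []"
| "cut_at u (x # xs) = (if snd x = u then [x] else x # cut_at u xs)"

definition erase_step :: "'v \<Rightarrow> ('e \<times> 'v) list \<Rightarrow> 'e \<times> 'v \<Rightarrow> ('e \<times> 'v) list" where
  "erase_step a cur x =
     (if snd x = a then [] else if snd x \<in> snd ` set cur then cut_at (snd x) cur else cur @ [x])"

definition loop_erase :: "'v \<Rightarrow> ('e \<times> 'v) list \<Rightarrow> ('e \<times> 'v) list" where
  "loop_erase a st = foldl (erase_step a) [] st"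

abbreviation step_verts :: "'v \<Rightarrow> ('e \<times> 'v) list \<Rightarrow> 'v list" where
  "step_verts a st \<equiv> a # map snd st"

lemma cut_at_eq_take: "\<exists>n. cut_at u xs = take n xs"
proof (induction xs)
  case (Cons x xs)
  then obtain n where "cut_at u xs = take n xs" by auto
  then show ?case by (cases "snd x = u") (auto intro: exI[of _ "Suc 0"] exI[of _ "Suc n"])
qed simp

lemma cut_at_eq_take_Suc:
  assumes "p < length xs" "map snd xs ! p = u" "u \<notin> set (take p (map snd xs))"
  shows "cut_at u xs = take (Suc p) xs"
  using assms
proof (induction xs arbitrary: p)
  case (Cons x xs)
  then show ?case by (cases p) auto
qed simp

lemma cut_at_last: "u \<in> snd ` set xs \<Longrightarrow> cut_at u xs \<noteq> [] \<and> snd (last (cut_at u xs)) = u"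
  by (induction xs) auto

lemma foldl_erase_step_distinct:
  "distinct (step_verts a (cur @ xs)) \<Longrightarrow> foldl (erase_step a) cur xs = cur @ xs"
proof (induction xs arbitrary: cur)
  case (Cons x xs)
  have "erase_step a cur x = cur @ [x]"
    using Cons.prems by (auto simp: erase_step_def)
  then show ?case using Cons.IH[of "cur @ [x]"] Cons.prems by simp
qed simp

lemma first_repeat:
  fixes vs :: "'a list"
  assumes "\<not> distinct vs"
  defines "j \<equiv> LEAST j. \<exists>i<j. vs ! i = vs ! j"
  defines "i \<equiv> LEAST i. i < j \<and> vs ! i = vs ! j"
  shows "i < j" "j < length vs" "vs ! i = vs ! j" "distinct (take j vs)"
proof -
  obtain i0 j0 where ij0: "i0 < j0" "j0 < length vs" "vs ! i0 = vs ! j0"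
    using assms(1) by (metis distinct_conv_nth linorder_neqE_nat)
  then have ex: "\<exists>i<j0. vs ! i = vs ! j0" by blast
  have "j \<le> j0" unfolding j_def by (rule Least_le) (rule ex)
  then show "j < length vs" using ij0 by simp
  have "\<exists>i<j. vs ! i = vs ! j" unfolding j_def by (rule LeastI) (rule ex)
  then have "i < j \<and> vs ! i = vs ! j" unfolding i_def by (rule LeastI_ex)
  then show "i < j" "vs ! i = vs ! j" by auto
  have neq: "vs ! i' \<noteq> vs ! j'" if "i' < j'" "j' < j" for i' j'
    using not_less_Least[of j' "\<lambda>j. \<exists>i<j. vs ! i = vs ! j"] that unfolding j_def by blast
  show "distinct (take j vs)"
  proof (rule distinct_conv_nth[THEN iffD2], intro allI impI)
    fix x y assume "x < length (take j vs)" "y < length (take j vs)" "x \<noteq> y"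
    then show "take j vs ! x \<noteq> take j vs ! y"
      using neq[of x y] neq[of y x] by (cases "x < y") auto
  qed
qed

lemma foldl_erase_step_first_loop:
  assumes ij: "i < j" "j \<le> length st"
    and rep: "step_verts a st ! i = step_verts a st ! j"
    and dist: "distinct (take j (step_verts a st))"
  shows "foldl (erase_step a) [] (take j st) = take i st"
proof -
  define x where "x = st ! (j - 1)"
  have take_j: "take j st = take (j - 1) st @ [x]"
    using ij by (cases j) (auto simp: take_Suc_conv_app_nth x_def)
  have verts_prefix: "take j (step_verts a st) = step_verts a (take (j - 1) st)"
    using ij by (cases j) (auto simp: take_map)
  have prefix: "foldl (erase_step a) [] (take (j - 1) st) = take (j - 1) st"
    using foldl_erase_step_distinct[of a "[]"] dist verts_prefix by simp
  have x_rep: "snd x = step_verts a st ! i"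
    using rep ij by (simp add: x_def)
  have "erase_step a (take (j - 1) st) x = take i st"
  proof (cases i)
    case 0
    then show ?thesis using x_rep by (simp add: erase_step_def)
  next
    case (Suc p)
    define L where "L = map snd (take (j - 1) st)"
    have p: "p < length (take (j - 1) st)" "L ! p = snd x"
      using ij Suc x_rep by (auto simp: L_def)
    have d: "a \<notin> set L" "distinct L"
      using dist verts_prefix by (simp_all add: L_def)
    have "snd x \<in> set (drop p L)"
      using Cons_nth_drop_Suc[of p L] p by (simp add: L_def) (metis list.set_intros(1))
    then have "snd x \<notin> set (take p L)"
      using set_take_disj_set_drop_if_distinct[OF d(2), of p p] by blast
    moreover have "snd x \<in> set L"
      using p by (metis L_def length_map nth_mem)
    ultimately show ?thesis
      using cut_at_eq_take_Suc[OF p(1), of "snd x"] p(2) d(1) Suc ij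
      by (auto simp: erase_step_def min_def L_def)
  qed
  then show ?thesis using take_j prefix by simp
qed

lemma LE_eq_loop_erase: "LE (a, st) = (a, loop_erase a st)"
proof (induction "(a, st)" arbitrary: a st rule: LE.induct)
  case (1 a st)
  show ?case
  proof (cases "distinct (step_verts a st)")
    case True
    then show ?thesis using foldl_erase_step_distinct[of a "[]" st] by (simp add: loop_erase_def)
  next
    case False
    define vs where "vs = step_verts a st"
    define j where "j = (LEAST j. \<exists>i<j. vs ! i = vs ! j)"
    define i where "i = (LEAST i. i < j \<and> vs ! i = vs ! j)"
    note rep = first_repeat[OF False[folded vs_def], folded j_def i_def]
    have "LE (a, st) = LE (a, take i st @ drop j st)"
      using False unfolding LE.simps[of a st] by (simp only: if_False Let_def vs_def j_def i_def)
    also have "\<dots> = (a, loop_erase a (take i st @ drop j st))"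
      using 1[OF False vs_def j_def i_def] .
    also have "loop_erase a (take i st @ drop j st) = foldl (erase_step a) (take i st) (drop j st)"
    proof -
      have "step_verts a (take i st) = take (Suc i) (take j vs)"
        using rep(1) by (simp add: vs_def take_map)
      then have "distinct (step_verts a (take i st))"
        using distinct_take[OF rep(4)] by metis
      then show ?thesis
        using foldl_erase_step_distinct[of a "[]" "take i st"] by (simp add: loop_erase_def)
    qed
    also have "take i st = foldl (erase_step a) [] (take j st)"
      using foldl_erase_step_first_loop[of i j st a] rep by (simp add: vs_def)
    finally show ?thesis
      by (simp add: loop_erase_def flip: foldl_append)
  qed
qed

definition end_vertex :: "'v \<Rightarrow> ('e \<times> 'v) list \<Rightarrow> 'v" where
  "end_vertex a xs = (if xs = [] then a else snd (last xs))"

lemma last_step_verts: "last (step_verts a xs) = end_vertex a xs"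
  by (induction xs) (auto simp: end_vertex_def)

lemma end_vertex_Nil [simp]: "end_vertex a [] = a"
  and end_vertex_Cons [simp]: "end_vertex a (x # xs) = end_vertex (snd x) xs"
  and end_vertex_append: "end_vertex a (xs @ ys) = end_vertex (end_vertex a xs) ys"
  by (auto simp: end_vertex_def)

lemma end_vertex_take: "t \<le> length st \<Longrightarrow> end_vertex a (take t st) = step_verts a st ! t"
proof (induction st arbitrary: a t)
  case (Cons x st)
  then show ?case by (cases t) auto
qed simp

lemma end_vertex_erase_step: "end_vertex a (erase_step a cur x) = snd x"
  using cut_at_last[of "snd x" cur] by (auto simp: erase_step_def end_vertex_def)

lemma end_vertex_foldl_erase_step:
  "end_vertex a (foldl (erase_step a) cur xs) = end_vertex (end_vertex a cur) xs"
proof (induction xs arbitrary: cur)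
  case (Cons x xs)
  then show ?case by (simp add: end_vertex_erase_step)
qed simp

lemma end_vertex_loop_erase: "end_vertex a (loop_erase a st) = end_vertex a st"
  by (simp add: loop_erase_def end_vertex_foldl_erase_step)

lemma distinct_foldl_erase_step:
  "distinct (step_verts a cur) \<Longrightarrow> distinct (step_verts a (foldl (erase_step a) cur xs))"
proof (induction xs arbitrary: cur)
  case (Cons x xs)
  obtain n where "cut_at (snd x) cur = take n cur" using cut_at_eq_take[of "snd x" cur] by blast
  moreover have "distinct (step_verts a (take n cur))"
    using distinct_take[OF Cons.prems, of "Suc n"] by (simp add: take_map)
  ultimately have "distinct (step_verts a (erase_step a cur x))"
    using Cons.prems by (auto simp: erase_step_def)
  then show ?case using Cons.IH by simp
qed simp

lemma set_foldl_erase_step: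
  "set (step_verts a (foldl (erase_step a) cur xs)) \<subseteq> set (step_verts a cur) \<union> snd ` set xs"
proof (induction xs arbitrary: cur)
  case (Cons x xs)
  obtain n where "cut_at (snd x) cur = take n cur" using cut_at_eq_take[of "snd x" cur] by blast
  then have "set (step_verts a (erase_step a cur x)) \<subseteq> set (step_verts a cur) \<union> {snd x}"
    by (auto simp: erase_step_def dest: in_set_takeD)
  then show ?case using Cons.IH[of "erase_step a cur x"] by simp blast
qed simp

lemma distinct_loop_erase: "distinct (step_verts a (loop_erase a st))"
  unfolding loop_erase_def by (rule distinct_foldl_erase_step) simp

lemma set_loop_erase: "set (step_verts a (loop_erase a st)) \<subseteq> set (step_verts a st)"
  using set_foldl_erase_step[of a "[]" st] by (auto simp: loop_erase_def)

lemma steps_ok_append: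
  "steps_ok src tgt v (xs @ ys) \<longleftrightarrow> steps_ok src tgt v xs \<and> steps_ok src tgt (end_vertex v xs) ys"
proof (induction xs arbitrary: v)
  case (Cons x xs)
  then show ?case by (cases x) simp
qed simp

lemma steps_ok_take: "steps_ok src tgt v xs \<Longrightarrow> steps_ok src tgt v (take n xs)"
  using steps_ok_append[of src tgt v "take n xs" "drop n xs"] by simp

lemma steps_ok_drop:
  "steps_ok src tgt v xs \<Longrightarrow> n \<le> length xs \<Longrightarrow> steps_ok src tgt (step_verts v xs ! n) (drop n xs)"
  using steps_ok_append[of src tgt v "take n xs" "drop n xs"] by (simp add: end_vertex_take)

lemma steps_ok_tgt: "steps_ok src tgt v st \<Longrightarrow> z \<in> set st \<Longrightarrow> snd z = tgt (fst z)"
proof (induction st arbitrary: v)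
  case (Cons x st)
  then show ?case by (cases x) auto
qed simp

lemma steps_ok_foldl_erase_step:
  "steps_ok src tgt a cur \<Longrightarrow> steps_ok src tgt (end_vertex a cur) xs \<Longrightarrow>
   steps_ok src tgt a (foldl (erase_step a) cur xs)"
proof (induction xs arbitrary: cur)
  case (Cons x xs)
  obtain n where n: "cut_at (snd x) cur = take n cur" using cut_at_eq_take[of "snd x" cur] by blast
  have "steps_ok src tgt a (cur @ [x])"
    using Cons.prems by (cases x) (simp add: steps_ok_append)
  then have "steps_ok src tgt a (erase_step a cur x)"
    using n Cons.prems(1) steps_ok_take by (auto simp: erase_step_def)
  then show ?case
    using Cons.IH Cons.prems(2) end_vertex_erase_step[of a cur x] by (cases x) simp
qed simp

lemma steps_ok_loop_erase: "steps_ok src tgt a st \<Longrightarrow> steps_ok src tgt a (loop_erase a st)"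
  unfolding loop_erase_def by (rule steps_ok_foldl_erase_step) simp_all

lemma foldl_erase_step_append:
  assumes "\<forall>z\<in>set rest. snd z \<notin> set (step_verts a cur)"
  shows "foldl (erase_step a) (cur @ y) rest = cur @ foldl (erase_step (end_vertex a cur)) y rest"
  using assms
proof (induction rest arbitrary: y)
  case (Cons z rest)
  have end_cur: "end_vertex a cur \<in> set (step_verts a cur)"
    unfolding last_step_verts[symmetric] by (rule last_in_set) simp
  from Cons.prems have z_new: "snd z \<notin> set (step_verts a cur)"
    by (meson list.set_intros(1))
  then have z: "snd z \<noteq> a" "snd z \<notin> snd ` set cur"
    by auto
  moreover have "snd z \<noteq> end_vertex a cur"
    using z_new end_cur by metis
  moreover have "cut_at (snd z) (cur @ y) = cur @ cut_at (snd z) y"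
    using z(2) by (induction cur) auto
  ultimately have "erase_step a (cur @ y) z = cur @ erase_step (end_vertex a cur) y z"
    by (simp add: erase_step_def image_Un)
  then show ?case using Cons.IH Cons.prems by simp
qed simp

lemma distinct_last_notin_take:
  assumes "distinct xs" "n < length xs"
  shows "last xs \<notin> set (take n xs)"
proof -
  have "xs = butlast xs @ [last xs]" using assms(2) by (intro append_butlast_last_id[symmetric]) auto
  then have "last xs \<notin> set (butlast xs)"
    using assms(1) by (metis distinct_append disjoint_iff list.set_intros(1))
  then show ?thesis
    using assms(2) by (metis in_set_takeD take_butlast)
qed

lemma erase_step_revisit:
  assumes dist: "distinct (step_verts a cur)"
    and z: "snd z \<in> set (step_verts a cur)" "snd z \<noteq> end_vertex a cur"
  shows "end_vertex a cur \<notin> set (step_verts a (erase_step a (cur @ Y) z))"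
proof (cases "snd z = a")
  case True
  then show ?thesis using z by (simp add: erase_step_def)
next
  case False
  define v where "v = end_vertex a cur"
  have z_cur: "snd z \<in> snd ` set cur" using z False by auto
  obtain n where n: "cut_at (snd z) cur = take n cur" using cut_at_eq_take[of "snd z" cur] by blast
  have "cut_at (snd z) (cur @ Y) = cut_at (snd z) cur"
    using z_cur by (induction cur) auto
  then have erase: "erase_step a (cur @ Y) z = take n cur"
    using False z_cur n by (auto simp: erase_step_def)
  have "end_vertex a (take n cur) = snd z"
    using cut_at_last[OF z_cur] n by (simp add: end_vertex_def)
  then have "n < length cur"
    using z(2) by (cases "n < length cur") auto
  then have "v \<notin> set (take (Suc n) (step_verts a cur))"
    using distinct_last_notin_take[OF dist, of "Suc n"] unfolding last_step_verts v_def by simp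
  then show ?thesis
    using erase by (simp add: v_def take_map)
qed

lemma loop_erase_split_at_last_visit:
  assumes t: "t \<le> length st" and v: "step_verts a st ! t = v"
    and last: "v \<notin> snd ` set (drop t st)"
    and survives: "v \<in> set (step_verts a (loop_erase a st))"
  shows "\<forall>z\<in>set (drop t st). snd z \<notin> set (step_verts a (loop_erase a (take t st)))" (is ?avoid)
    and "loop_erase a st = loop_erase a (take t st) @ loop_erase v (drop t st)"
proof -
  define cur where "cur = loop_erase a (take t st)"
  have end_cur: "end_vertex a cur = v"
    using t v by (simp add: cur_def end_vertex_loop_erase end_vertex_take)
  have full: "loop_erase a st = foldl (erase_step a) cur (drop t st)"
    unfolding cur_def loop_erase_def by (simp flip: foldl_append)
  show ?avoid
  proof (rule ccontr)
    assume "\<not> ?avoid"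
    then have "\<exists>z\<in>set (drop t st). snd z \<in> set (step_verts a cur)"
      unfolding cur_def by blast
    from split_list_first_prop[OF this] obtain r1 z r2 where split: "drop t st = r1 @ z # r2"
      and z: "snd z \<in> set (step_verts a cur)"
      and r1: "\<forall>z'\<in>set r1. snd z' \<notin> set (step_verts a cur)"
      by blast
    define Y where "Y = foldl (erase_step v) [] r1"
    have "foldl (erase_step a) cur r1 = cur @ Y"
      using foldl_erase_step_append[OF r1, of "[]"] end_cur by (simp add: Y_def)
    then have rest: "loop_erase a st = foldl (erase_step a) (erase_step a (cur @ Y) z) r2"
      using full split by simp
    have "distinct (step_verts a cur)"
      unfolding cur_def by (rule distinct_loop_erase)
    moreover have "snd z \<noteq> v" using last split by auto
    ultimately have "v \<notin> set (step_verts a (erase_step a (cur @ Y) z))"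
      using erase_step_revisit[OF _ z, of Y] end_cur by simp
    moreover have "v \<notin> snd ` set r2" using last split by auto
    ultimately show False
      using survives set_foldl_erase_step[of a "erase_step a (cur @ Y) z" r2] unfolding rest
      by blast
  qed
  then show "loop_erase a st = loop_erase a (take t st) @ loop_erase v (drop t st)"
    using full foldl_erase_step_append[of "drop t st" a cur "[]"] end_cur
    by (simp add: cur_def loop_erase_def)
qed

section \<open>Walks and splicing\<close>

lemma walk_verts_eq: "walk_verts p = step_verts (fst p) (snd p)"
  by (simp add: walk_verts_def)

lemma LE_eq: "LE p = (fst p, loop_erase (fst p) (snd p))"
  using LE_eq_loop_erase[of "fst p" "snd p"] by simp

lemma is_walk_iff:
  "is_walk src tgt x y p \<longleftrightarrow>
     fst p = x \<and> end_vertex (fst p) (snd p) = y \<and> steps_ok src tgt (fst p) (snd p)"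
  unfolding is_walk_def walk_verts_eq last_step_verts by simp

lemma is_walk_LE: "is_walk src tgt x y p \<Longrightarrow> is_walk src tgt x y (LE p)"
  unfolding is_walk_iff LE_eq by (auto simp: end_vertex_loop_erase steps_ok_loop_erase)

lemma set_walk_verts_LE: "set (walk_verts (LE p)) \<subseteq> set (walk_verts p)"
  using set_loop_erase[of "fst p" "snd p"] by (simp add: walk_verts_eq LE_eq)

lemma distinct_walk_verts_LE: "distinct (walk_verts (LE p))"
  unfolding walk_verts_eq LE_eq using distinct_loop_erase by simp

definition walk_splice :: "('v, 'e) walk \<Rightarrow> ('v, 'e) walk \<Rightarrow> nat \<Rightarrow> nat \<Rightarrow> ('v, 'e) walk" where
  "walk_splice P Q s t = (fst P, take s (snd P) @ drop t (snd Q))"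

lemma walk_verts_splice:
  "walk_verts (walk_splice P Q s t) = take (Suc s) (walk_verts P) @ map snd (drop t (snd Q))"
  unfolding walk_splice_def walk_verts_eq by (simp add: take_map)

lemma set_walk_verts_splice:
  "set (walk_verts (walk_splice P Q s t)) \<subseteq> set (walk_verts P) \<union> set (walk_verts Q)"
proof -
  have "set (map snd (drop t (snd Q))) \<subseteq> set (walk_verts Q)"
    using set_drop_subset[of t "snd Q"] by (auto simp: walk_verts_eq)
  then show ?thesis
    unfolding walk_verts_splice using set_take_subset[of "Suc s" "walk_verts P"] by auto
qed

lemma nth_walk_verts_splice:
  "s \<le> length (snd P) \<Longrightarrow> walk_verts (walk_splice P Q s t) ! s = walk_verts P ! s"
proof -
  assume "s \<le> length (snd P)"
  then have "s < length (take (Suc s) (walk_verts P))"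
    by (simp add: walk_verts_eq)
  then show ?thesis
    unfolding walk_verts_splice by (simp add: nth_append_left)
qed

lemma is_walk_splice:
  assumes P: "is_walk src tgt x y P" and Q: "is_walk src tgt x' y' Q"
    and s: "s \<le> length (snd P)" and t: "t \<le> length (snd Q)"
    and meet: "walk_verts P ! s = walk_verts Q ! t"
  shows "is_walk src tgt x y' (walk_splice P Q s t)"
proof -
  have "steps_ok src tgt (fst P) (take s (snd P))"
    using P steps_ok_take by (auto simp: is_walk_iff)
  moreover have "end_vertex (fst P) (take s (snd P)) = walk_verts Q ! t"
    using end_vertex_take[OF s] meet by (simp add: walk_verts_eq)
  moreover have "steps_ok src tgt (walk_verts Q ! t) (drop t (snd Q))"
    using Q steps_ok_drop[OF _ t] by (auto simp: is_walk_iff walk_verts_eq)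
  moreover have "end_vertex (walk_verts Q ! t) (drop t (snd Q)) = y'"
  proof -
    have "y' = end_vertex (fst Q) (take t (snd Q) @ drop t (snd Q))"
      using Q unfolding is_walk_iff by (metis append_take_drop_id)
    also have "\<dots> = end_vertex (walk_verts Q ! t) (drop t (snd Q))"
      by (simp only: end_vertex_append end_vertex_take[OF t] walk_verts_eq)
    finally show ?thesis by simp
  qed
  ultimately show ?thesis
    using P by (simp add: is_walk_iff walk_splice_def steps_ok_append end_vertex_append)
qed

lemma wmon_splice_swap:
  "wmon (walk_splice P Q s t) + wmon (walk_splice Q P t s) = wmon P + wmon Q"
proof -
  have split: "wmon p = mset (map fst (take n (snd p))) + mset (map fst (drop n (snd p)))" for p n
    unfolding wmon_def by (metis append_take_drop_id map_append mset_append)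
  show ?thesis
    using split[of P s] split[of Q t] by (simp add: walk_splice_def wmon_def ac_simps)
qed

lemma walk_splice_splice:
  "s \<le> length (snd P) \<Longrightarrow> t \<le> length (snd Q) \<Longrightarrow> walk_splice (walk_splice P Q s t) (walk_splice Q P t s) s t = P"
  by (simp add: walk_splice_def)

definition last_visit :: "('v, 'e) walk \<Rightarrow> 'v \<Rightarrow> nat" where
  "last_visit p v = (GREATEST t. t \<le> length (snd p) \<and> walk_verts p ! t = v)"

lemma last_visit:
  assumes "v \<in> set (walk_verts p)"
  shows "last_visit p v \<le> length (snd p)" "walk_verts p ! last_visit p v = v"
    "v \<notin> snd ` set (drop (last_visit p v) (snd p))"
proof -
  obtain t where "t < length (walk_verts p)" "walk_verts p ! t = v"
    using assms by (auto simp: in_set_conv_nth)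
  then have "t \<le> length (snd p)" "walk_verts p ! t = v"
    by (simp_all add: walk_verts_eq)
  note t = this
  have "last_visit p v \<le> length (snd p) \<and> walk_verts p ! last_visit p v = v"
    unfolding last_visit_def by (rule GreatestI_nat[where k = t and b = "length (snd p)"]) (use t in auto)
  then show "last_visit p v \<le> length (snd p)" "walk_verts p ! last_visit p v = v" by auto
  show "v \<notin> snd ` set (drop (last_visit p v) (snd p))"
  proof
    assume "v \<in> snd ` set (drop (last_visit p v) (snd p))"
    then obtain q where q: "q < length (drop (last_visit p v) (snd p))"
      "snd (drop (last_visit p v) (snd p) ! q) = v"
      by (auto simp: in_set_conv_nth)
    then have "Suc (last_visit p v + q) \<le> last_visit p v"
      unfolding last_visit_def[of p v]
      by (intro Greatest_le_nat[where b = "length (snd p)"]) (auto simp: walk_verts_eq)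
    then show False by simp
  qed
qed

lemma last_visit_eqI:
  assumes "t \<le> length (snd p)" "walk_verts p ! t = v" "v \<notin> snd ` set (drop t (snd p))"
  shows "last_visit p v = t"
proof (rule ccontr)
  assume ne: "last_visit p v \<noteq> t"
  have "t < length (walk_verts p)"
    using assms(1) by (simp add: walk_verts_eq)
  then have v: "v \<in> set (walk_verts p)"
    using assms(2) nth_mem by metis
  have "t \<le> last_visit p v" unfolding last_visit_def
    by (rule Greatest_le_nat[where b = "length (snd p)"]) (use assms in auto)
  with ne have "t < last_visit p v" by simp
  moreover note last_visit[OF v]
  ultimately have "snd p ! (last_visit p v - 1) \<in> set (drop t (snd p))"
    and "snd (snd p ! (last_visit p v - 1)) = v"
    by (auto simp: walk_verts_eq in_set_conv_nth intro!: exI[of _ "last_visit p v - 1 - t"])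
  then show False using assms(3) by force
qed

lemma last_visit_splice:
  assumes "v \<in> set (walk_verts P)" "v \<in> set (walk_verts Q)"
  shows "last_visit (walk_splice P Q (last_visit P v) (last_visit Q v)) v = last_visit P v"
proof (rule last_visit_eqI)
  note lP = last_visit[OF assms(1)] and lQ = last_visit[OF assms(2)]
  show "last_visit P v \<le> length (snd (walk_splice P Q (last_visit P v) (last_visit Q v)))"
    using lP(1) by (simp add: walk_splice_def)
  show "walk_verts (walk_splice P Q (last_visit P v) (last_visit Q v)) ! last_visit P v = v"
    using lP(1,2) by (simp add: nth_walk_verts_splice)
  show "v \<notin> snd ` set (drop (last_visit P v) (snd (walk_splice P Q (last_visit P v) (last_visit Q v))))"
    using lP(1) lQ(3) by (simp add: walk_splice_def)
qed

lemma mem_walk_verts_splice: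
  assumes "v \<in> set (walk_verts P)"
  shows "v \<in> set (walk_verts (walk_splice P Q (last_visit P v) t))"
proof -
  have "last_visit P v < length (walk_verts (walk_splice P Q (last_visit P v) t))"
    using last_visit(1)[OF assms] by (simp add: walk_splice_def walk_verts_eq)
  then show ?thesis
    using nth_walk_verts_splice[OF last_visit(1)[OF assms]] last_visit(2)[OF assms] nth_mem
    by metis
qed

lemma distinct_append_Cons_eq:
  assumes "distinct (xs @ v # ys)" "xs @ v # ys = xs' @ v # ys'"
  shows "xs = xs'"
proof -
  have "v \<notin> set xs" "v \<notin> set xs'"
    using assms by (metis distinct_append distinct.simps(2) disjoint_iff list.set_intros(1))+
  then have "takeWhile (\<lambda>x. x \<noteq> v) (xs @ v # ys) = xs" "takeWhile (\<lambda>x. x \<noteq> v) (xs' @ v # ys') = xs'"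
    by (auto simp: takeWhile_append)
  then show ?thesis using assms(2) by simp
qed

lemma LE_prefix_at_last_visit:
  assumes LP: "walk_verts (LE P) = L1 @ v # R"
  shows "step_verts (fst P) (loop_erase (fst P) (take (last_visit P v) (snd P))) = L1 @ [v]"
    and "\<forall>z\<in>set (drop (last_visit P v) (snd P)). snd z \<notin> insert v (set L1)"
proof -
  define a where "a = fst P"
  define sP where "sP = snd P"
  define tP where "tP = last_visit P v"
  have vP: "v \<in> set (walk_verts P)" using LP set_walk_verts_LE[of P] by auto
  note lP = last_visit[OF vP, folded tP_def]
  have LP_eq: "walk_verts (LE P) = step_verts a (loop_erase a sP)"
    by (simp add: walk_verts_eq LE_eq a_def sP_def)
  define cur where "cur = loop_erase a (take tP sP)"
  have "v \<in> set (walk_verts (LE P))" unfolding LP by simp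
  then have spl_hyps: "tP \<le> length sP" "step_verts a sP ! tP = v" "v \<notin> snd ` set (drop tP sP)"
    "v \<in> set (step_verts a (loop_erase a sP))"
    using lP unfolding LP_eq by (simp_all add: sP_def a_def walk_verts_eq)
  note spl = loop_erase_split_at_last_visit[OF spl_hyps, folded cur_def]
  have end_cur: "end_vertex a cur = v"
    using spl_hyps(1,2) by (simp add: cur_def end_vertex_loop_erase end_vertex_take)
  have dist: "distinct (L1 @ v # R)" using distinct_walk_verts_LE[of P] LP by simp
  have "L1 @ v # R = step_verts a cur @ map snd (loop_erase v (drop tP sP))"
    using LP LP_eq spl(2) by (simp add: cur_def)
  also have "step_verts a cur = butlast (step_verts a cur) @ [v]"
    using end_cur by (metis append_butlast_last_id last_step_verts list.distinct(1))
  finally have "L1 = butlast (step_verts a cur)"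
    using distinct_append_Cons_eq[OF dist] by simp
  with \<open>step_verts a cur = _\<close> have cur_eq: "step_verts a cur = L1 @ [v]"
    by metis
  then show "step_verts (fst P) (loop_erase (fst P) (take (last_visit P v) (snd P))) = L1 @ [v]"
    by (simp add: cur_def a_def sP_def tP_def)
  have cur_set: "set (step_verts a cur) = insert v (set L1)"
    using cur_eq by (metis Un_insert_right append_Nil2 list.set(2) set_append)
  show "\<forall>z\<in>set (drop (last_visit P v) (snd P)). snd z \<notin> insert v (set L1)"
    using spl(1) unfolding cur_set sP_def tP_def .
qed

lemma LE_splice_last_visit:
  assumes LP: "walk_verts (LE P) = L1 @ v # R"
    and vQ: "v \<in> set (walk_verts Q)" and QL1: "set (walk_verts Q) \<inter> set L1 = {}"
  shows "\<exists>R'. walk_verts (LE (walk_splice P Q (last_visit P v) (last_visit Q v))) = L1 @ v # R'"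
    and "set (walk_verts (walk_splice Q P (last_visit Q v) (last_visit P v))) \<inter> set L1 = {}"
proof -
  define a where "a = fst P"
  define cur where "cur = loop_erase a (take (last_visit P v) (snd P))"
  define tQ where "tQ = last_visit Q v"
  note prefix = LE_prefix_at_last_visit[OF LP]
  have cur_eq: "step_verts a cur = L1 @ [v]"
    unfolding cur_def a_def by (rule prefix(1))
  then have end_cur: "end_vertex a cur = v"
    by (metis last_snoc last_step_verts)
  have "\<forall>z\<in>set (drop tQ (snd Q)). snd z \<notin> set (step_verts a cur)"
  proof
    fix z assume z: "z \<in> set (drop tQ (snd Q))"
    then have "snd z \<in> set (walk_verts Q)"
      by (auto simp: walk_verts_eq dest: in_set_dropD)
    then show "snd z \<notin> set (step_verts a cur)"
      using z QL1 last_visit(3)[OF vQ] cur_eq by (auto simp: tQ_def)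
  qed
  then have "loop_erase a (take (last_visit P v) (snd P) @ drop tQ (snd Q)) = cur @ loop_erase v (drop tQ (snd Q))"
    using foldl_erase_step_append[of "drop tQ (snd Q)" a cur "[]"] end_cur
    by (simp add: loop_erase_def cur_def)
  then have "walk_verts (LE (walk_splice P Q (last_visit P v) tQ)) =
      step_verts a cur @ map snd (loop_erase v (drop tQ (snd Q)))"
    by (simp add: walk_verts_eq LE_eq walk_splice_def a_def)
  then show "\<exists>R'. walk_verts (LE (walk_splice P Q (last_visit P v) (last_visit Q v))) = L1 @ v # R'"
    unfolding cur_eq tQ_def by auto
  have "set (take (Suc tQ) (walk_verts Q)) \<inter> set L1 = {}"
    using QL1 set_take_subset[of "Suc tQ" "walk_verts Q"] by blast
  moreover have "set (map snd (drop (last_visit P v) (snd P))) \<inter> set L1 = {}"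
    using prefix(2) by auto
  ultimately show "set (walk_verts (walk_splice Q P (last_visit Q v) (last_visit P v))) \<inter> set L1 = {}"
    by (auto simp: walk_verts_splice tQ_def)
qed

section \<open>Fomin's involution\<close>

definition LE_conflict :: "nat \<Rightarrow> (nat \<Rightarrow> ('v, 'e) walk) \<Rightarrow> nat \<Rightarrow> nat \<Rightarrow> bool" where
  "LE_conflict k f i j \<longleftrightarrow>
     i < j \<and> j < k \<and> set (walk_verts (f j)) \<inter> set (walk_verts (LE (f i))) \<noteq> {}"

definition has_conflict :: "nat \<Rightarrow> (nat \<Rightarrow> ('v, 'e) walk) \<Rightarrow> bool" where
  "has_conflict k f \<longleftrightarrow> (\<exists>i j. LE_conflict k f i j)"

definition first_conflict :: "nat \<Rightarrow> (nat \<Rightarrow> ('v, 'e) walk) \<Rightarrow> nat" where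
  "first_conflict k f = (LEAST i. \<exists>j. LE_conflict k f i j)"

definition later_verts :: "nat \<Rightarrow> (nat \<Rightarrow> ('v, 'e) walk) \<Rightarrow> nat \<Rightarrow> 'v set" where
  "later_verts k f i = (\<Union>m\<in>{i<..<k}. set (walk_verts (f m)))"

definition swap_vertex :: "nat \<Rightarrow> (nat \<Rightarrow> ('v, 'e) walk) \<Rightarrow> 'v" where
  "swap_vertex k f = hd (dropWhile (\<lambda>x. x \<notin> later_verts k f (first_conflict k f))
                                   (walk_verts (LE (f (first_conflict k f)))))"

definition swap_partner :: "nat \<Rightarrow> (nat \<Rightarrow> ('v, 'e) walk) \<Rightarrow> nat" where
  "swap_partner k f =
     (LEAST j. first_conflict k f < j \<and> j < k \<and> swap_vertex k f \<in> set (walk_verts (f j)))"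

definition swap_tails :: "nat \<Rightarrow> (nat \<Rightarrow> ('v, 'e) walk) \<Rightarrow> nat \<Rightarrow> ('v, 'e) walk" where
  "swap_tails k f =
     (let i = first_conflict k f; j = swap_partner k f; v = swap_vertex k f in
      f(i := walk_splice (f i) (f j) (last_visit (f i) v) (last_visit (f j) v),
        j := walk_splice (f j) (f i) (last_visit (f j) v) (last_visit (f i) v)))"

lemma first_conflict:
  assumes "has_conflict k f"
  shows "\<exists>j. LE_conflict k f (first_conflict k f) j"
    and "l < first_conflict k f \<Longrightarrow> \<not> LE_conflict k f l m"
  using assms LeastI_ex[of "\<lambda>i. \<exists>j. LE_conflict k f i j"] not_less_Least[of l "\<lambda>i. \<exists>j. LE_conflict k f i j"]
  unfolding has_conflict_def first_conflict_def by blast+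

lemma first_conflict_eqI:
  "LE_conflict k f i j \<Longrightarrow> (\<And>l m. l < i \<Longrightarrow> \<not> LE_conflict k f l m) \<Longrightarrow> first_conflict k f = i"
  unfolding first_conflict_def by (rule Least_equality) (auto simp: not_less[symmetric])

lemma swap_vertex:
  assumes "has_conflict k f"
  obtains L1 R where "walk_verts (LE (f (first_conflict k f))) = L1 @ swap_vertex k f # R"
    and "set L1 \<inter> later_verts k f (first_conflict k f) = {}"
    and "swap_vertex k f \<in> later_verts k f (first_conflict k f)"
proof -
  define L where "L = walk_verts (LE (f (first_conflict k f)))"
  define U where "U = later_verts k f (first_conflict k f)"
  have "\<exists>x\<in>set L. x \<in> U"
    using first_conflict(1)[OF assms] by (auto simp: LE_conflict_def L_def U_def later_verts_def)
  then have nonempty: "dropWhile (\<lambda>x. x \<notin> U) L \<noteq> []"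
    by (simp add: dropWhile_eq_Nil_conv)
  have "L = takeWhile (\<lambda>x. x \<notin> U) L @ swap_vertex k f # tl (dropWhile (\<lambda>x. x \<notin> U) L)"
    using nonempty takeWhile_dropWhile_id[of "\<lambda>x. x \<notin> U" L]
    by (simp add: swap_vertex_def L_def U_def)
  moreover have "set (takeWhile (\<lambda>x. x \<notin> U) L) \<inter> U = {}"
    by (auto dest: set_takeWhileD)
  moreover have "swap_vertex k f \<in> U"
    using hd_dropWhile[OF nonempty] by (simp add: swap_vertex_def L_def U_def)
  ultimately show ?thesis using that by (simp add: L_def U_def)
qed

lemma swap_vertex_eqI:
  assumes "walk_verts (LE (f (first_conflict k f))) = L1 @ v # R"
    and "set L1 \<inter> later_verts k f (first_conflict k f) = {}"
    and "v \<in> later_verts k f (first_conflict k f)"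
  shows "swap_vertex k f = v"
  using assms by (auto simp: swap_vertex_def dropWhile_append)

lemma swap_partner:
  assumes "has_conflict k f"
  shows "first_conflict k f < swap_partner k f" "swap_partner k f < k"
    and "swap_vertex k f \<in> set (walk_verts (f (swap_partner k f)))"
    and "first_conflict k f < m \<Longrightarrow> m < swap_partner k f \<Longrightarrow> swap_vertex k f \<notin> set (walk_verts (f m))"
proof -
  let ?P = "\<lambda>j. first_conflict k f < j \<and> j < k \<and> swap_vertex k f \<in> set (walk_verts (f j))"
  obtain L1 R where "swap_vertex k f \<in> later_verts k f (first_conflict k f)"
    using swap_vertex[OF assms] .
  then have "\<exists>j. ?P j" by (auto simp: later_verts_def)
  then have "?P (swap_partner k f)"
    unfolding swap_partner_def by (rule LeastI_ex)
  then show "first_conflict k f < swap_partner k f" "swap_partner k f < k"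
    "swap_vertex k f \<in> set (walk_verts (f (swap_partner k f)))" by auto
  show "swap_vertex k f \<notin> set (walk_verts (f m))"
    if "first_conflict k f < m" "m < swap_partner k f"
    using not_less_Least[of m ?P] that \<open>?P (swap_partner k f)\<close> unfolding swap_partner_def by auto
qed

lemma swap_partner_eqI:
  assumes "first_conflict k f < j" "j < k" "swap_vertex k f \<in> set (walk_verts (f j))"
    and "\<And>m. first_conflict k f < m \<Longrightarrow> m < j \<Longrightarrow> swap_vertex k f \<notin> set (walk_verts (f m))"
  shows "swap_partner k f = j"
  unfolding swap_partner_def
  by (rule Least_equality) (use assms in \<open>auto simp: not_less[symmetric]\<close>)

lemma swap_tails_other: "m \<noteq> first_conflict k f \<Longrightarrow> m \<noteq> swap_partner k f \<Longrightarrow> swap_tails k f m = f m"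
  by (simp add: swap_tails_def Let_def)

lemma swap_tails_prefix:
  assumes conflict: "has_conflict k f"
  defines "i \<equiv> first_conflict k f" and "j \<equiv> swap_partner k f" and "v \<equiv> swap_vertex k f"
  obtains L1 R' where "walk_verts (LE (swap_tails k f i)) = L1 @ v # R'"
    and "set L1 \<inter> later_verts k (swap_tails k f) i = {}"
    and "v \<in> set (walk_verts (swap_tails k f j))"
proof -
  note partner = swap_partner[OF conflict, folded i_def j_def v_def]
  obtain L1 R where LP: "walk_verts (LE (f i)) = L1 @ v # R"
    and L1: "set L1 \<inter> later_verts k f i = {}"
    using swap_vertex[OF conflict] unfolding i_def v_def by metis
  have "set (walk_verts (f j)) \<subseteq> later_verts k f i"
    using partner(1,2) by (auto simp: later_verts_def)
  with L1 have QL1: "set (walk_verts (f j)) \<inter> set L1 = {}"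
    by blast
  have swapped: "swap_tails k f i = walk_splice (f i) (f j) (last_visit (f i) v) (last_visit (f j) v)"
    "swap_tails k f j = walk_splice (f j) (f i) (last_visit (f j) v) (last_visit (f i) v)"
    using partner(1) by (simp_all add: swap_tails_def Let_def i_def j_def v_def)
  obtain R' where "walk_verts (LE (swap_tails k f i)) = L1 @ v # R'"
    using LE_splice_last_visit(1)[OF LP partner(3) QL1] swapped by auto
  moreover have "set L1 \<inter> later_verts k (swap_tails k f) i = {}"
  proof -
    have "set (walk_verts (swap_tails k f m)) \<inter> set L1 = {}" if "i < m" "m < k" for m
    proof (cases "m = j")
      case True
      then show ?thesis using LE_splice_last_visit(2)[OF LP partner(3) QL1] swapped(2) by simp
    next
      case False
      with that have "swap_tails k f m = f m"
        by (intro swap_tails_other) (auto simp: i_def j_def)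
      moreover have "set (walk_verts (f m)) \<subseteq> later_verts k f i"
        using that by (auto simp: later_verts_def)
      ultimately show ?thesis using L1 by (simp only:) blast
    qed
    then show ?thesis unfolding later_verts_def by (simp add: Int_UN_distrib Int_commute)
  qed
  moreover have "v \<in> set (walk_verts (swap_tails k f j))"
    using swapped(2) mem_walk_verts_splice[OF partner(3)] by simp
  ultimately show ?thesis by (rule that)
qed

lemma set_walk_verts_swap_tails:
  assumes "m = first_conflict k f \<or> m = swap_partner k f"
  shows "set (walk_verts (swap_tails k f m)) \<subseteq>
           set (walk_verts (f (first_conflict k f))) \<union> set (walk_verts (f (swap_partner k f)))"
proof -
  let ?i = "first_conflict k f" and ?j = "swap_partner k f" and ?v = "swap_vertex k f"
  have "swap_tails k f m = walk_splice (f ?i) (f ?j) (last_visit (f ?i) ?v) (last_visit (f ?j) ?v) \<or>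
      swap_tails k f m = walk_splice (f ?j) (f ?i) (last_visit (f ?j) ?v) (last_visit (f ?i) ?v)"
    using assms by (auto simp: swap_tails_def Let_def)
  then show ?thesis
  proof
    assume eq: "swap_tails k f m = walk_splice (f ?i) (f ?j) (last_visit (f ?i) ?v) (last_visit (f ?j) ?v)"
    show ?thesis unfolding eq by (rule set_walk_verts_splice)
  next
    assume eq: "swap_tails k f m = walk_splice (f ?j) (f ?i) (last_visit (f ?j) ?v) (last_visit (f ?i) ?v)"
    show ?thesis unfolding eq using set_walk_verts_splice[of "f ?j" "f ?i"] by blast
  qed
qed

lemma swap_tails_no_earlier_conflict:
  assumes conflict: "has_conflict k f" and l: "l < first_conflict k f"
  shows "\<not> LE_conflict k (swap_tails k f) l m"
proof
  let ?i = "first_conflict k f" and ?j = "swap_partner k f" and ?f' = "swap_tails k f"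
  note partner = swap_partner[OF conflict]
  assume "LE_conflict k ?f' l m"
  moreover have "?f' l = f l" using l partner(1) by (intro swap_tails_other) auto
  ultimately have lm: "l < m" "m < k"
    and meet: "set (walk_verts (?f' m)) \<inter> set (walk_verts (LE (f l))) \<noteq> {}"
    by (auto simp: LE_conflict_def)
  have no_conflict: "\<not> LE_conflict k f l m'" for m'
    using first_conflict(2)[OF conflict] l by simp
  show False
  proof (cases "m = ?i \<or> m = ?j")
    case True
    have "set (walk_verts (f ?i)) \<inter> set (walk_verts (LE (f l))) = {}"
      and "set (walk_verts (f ?j)) \<inter> set (walk_verts (LE (f l))) = {}"
      using no_conflict[of ?i] no_conflict[of ?j] l partner(1,2) by (auto simp: LE_conflict_def)
    with set_walk_verts_swap_tails[OF True] meet show False by blast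
  next
    case False
    then have "?f' m = f m" by (intro swap_tails_other) auto
    then show False using no_conflict[of m] lm meet by (auto simp: LE_conflict_def)
  qed
qed

lemma swap_tails_invariants:
  assumes conflict: "has_conflict k f"
  shows "has_conflict k (swap_tails k f)"
    and "first_conflict k (swap_tails k f) = first_conflict k f"
    and "swap_vertex k (swap_tails k f) = swap_vertex k f"
    and "swap_partner k (swap_tails k f) = swap_partner k f"
proof -
  let ?i = "first_conflict k f" and ?j = "swap_partner k f" and ?v = "swap_vertex k f"
  let ?f' = "swap_tails k f"
  note partner = swap_partner[OF conflict]
  obtain L1 R' where LP': "walk_verts (LE (?f' ?i)) = L1 @ ?v # R'"
    and L1': "set L1 \<inter> later_verts k ?f' ?i = {}" and vQ': "?v \<in> set (walk_verts (?f' ?j))"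
    by (rule swap_tails_prefix[OF conflict])
  have conflict': "LE_conflict k ?f' ?i ?j"
    using partner(1,2) vQ' LP' by (auto simp: LE_conflict_def)
  show first': "first_conflict k ?f' = ?i"
    using conflict' swap_tails_no_earlier_conflict[OF conflict] by (rule first_conflict_eqI)
  then show "has_conflict k ?f'"
    using conflict' by (auto simp: has_conflict_def)
  have "?v \<in> later_verts k ?f' ?i" using vQ' partner(1,2) by (auto simp: later_verts_def)
  then show vertex': "swap_vertex k ?f' = ?v"
    using LP' L1' unfolding first'[symmetric] by (rule swap_vertex_eqI[rotated 2])
  show "swap_partner k ?f' = ?j"
  proof (rule swap_partner_eqI)
    show "first_conflict k ?f' < ?j" using partner(1) first' by simp
    show "?j < k" by (rule partner(2))
    show "swap_vertex k ?f' \<in> set (walk_verts (?f' ?j))" using vQ' vertex' by simp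
    fix m assume m: "first_conflict k ?f' < m" "m < ?j"
    then have "?f' m = f m" using first' by (intro swap_tails_other) auto
    then show "swap_vertex k ?f' \<notin> set (walk_verts (?f' m))"
      using partner(4) m first' vertex' by simp
  qed
qed

lemma swap_tails_involutive:
  assumes conflict: "has_conflict k f"
  shows "swap_tails k (swap_tails k f) = f"
proof -
  let ?i = "first_conflict k f" and ?j = "swap_partner k f" and ?v = "swap_vertex k f"
  note partner = swap_partner[OF conflict] and inv = swap_tails_invariants[OF conflict]
  obtain L1 R where "walk_verts (LE (f ?i)) = L1 @ ?v # R"
    using swap_vertex[OF conflict] by metis
  then have vP: "?v \<in> set (walk_verts (f ?i))"
    using set_walk_verts_LE[of "f ?i"] by auto
  note vQ = partner(3)
  have swapped: "swap_tails k f ?i = walk_splice (f ?i) (f ?j) (last_visit (f ?i) ?v) (last_visit (f ?j) ?v)"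
    "swap_tails k f ?j = walk_splice (f ?j) (f ?i) (last_visit (f ?j) ?v) (last_visit (f ?i) ?v)"
    using partner(1) by (simp_all add: swap_tails_def Let_def)
  have "last_visit (swap_tails k f ?i) ?v = last_visit (f ?i) ?v"
    and "last_visit (swap_tails k f ?j) ?v = last_visit (f ?j) ?v"
    using last_visit_splice[OF vP vQ] last_visit_splice[OF vQ vP] swapped by simp_all
  then show ?thesis
    using partner(1) last_visit(1)[OF vP] last_visit(1)[OF vQ]
    by (auto simp: swap_tails_def[of k "swap_tails k f"] Let_def inv swapped walk_splice_splice
        swap_tails_other fun_eq_iff)
qed

lemma is_walk_swap_tails:
  assumes conflict: "has_conflict k f"
    and walks: "\<And>m. m < k \<Longrightarrow> is_walk src tgt (a m) (c m) (f m)"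
    and m: "m < k"
  shows "is_walk src tgt (a m) (c (transpose (first_conflict k f) (swap_partner k f) m)) (swap_tails k f m)"
proof -
  let ?i = "first_conflict k f" and ?j = "swap_partner k f" and ?v = "swap_vertex k f"
  note partner = swap_partner[OF conflict]
  obtain L1 R where "walk_verts (LE (f ?i)) = L1 @ ?v # R"
    using swap_vertex[OF conflict] by metis
  then have vP: "?v \<in> set (walk_verts (f ?i))"
    using set_walk_verts_LE[of "f ?i"] by auto
  note vQ = partner(3) and lP = last_visit[OF vP] and lQ = last_visit[OF partner(3)]
  have P: "is_walk src tgt (a ?i) (c ?i) (f ?i)" and Q: "is_walk src tgt (a ?j) (c ?j) (f ?j)"
    using walks partner(1,2) by auto
  consider "m = ?i" | "m = ?j" | "m \<noteq> ?i" "m \<noteq> ?j" by blast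
  then show ?thesis
  proof cases
    case 1
    then show ?thesis
      using is_walk_splice[OF P Q lP(1) lQ(1)] lP(2) lQ(2) partner(1)
      by (simp add: swap_tails_def Let_def)
  next
    case 2
    then show ?thesis
      using is_walk_splice[OF Q P lQ(1) lP(1)] lP(2) lQ(2) partner(1)
      by (simp add: swap_tails_def Let_def)
  next
    case 3
    then show ?thesis using walks[OF m] by (simp add: swap_tails_other)
  qed
qed

lemma sum_swap_pair:
  assumes "finite A" "i \<in> A" "j \<in> A" "i \<noteq> j"
    and "\<And>m. m \<in> A \<Longrightarrow> m \<noteq> i \<Longrightarrow> m \<noteq> j \<Longrightarrow> g m = h m" and "g i + g j = h i + h j"
  shows "sum g A = (sum h A :: 'a :: comm_monoid_add)"
proof -
  have two: "sum u A = u i + u j + sum u (A - {i} - {j})" for u :: "_ \<Rightarrow> 'a"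
    using assms(1-4) sum.remove[of A i u] sum.remove[of "A - {i}" j u] by (simp add: add.assoc)
  have "sum g (A - {i} - {j}) = sum h (A - {i} - {j})"
    using assms(5) by (intro sum.cong) auto
  then show ?thesis
    using two[of g] two[of h] assms(6) by simp
qed

definition walk_families ::
  "('e \<Rightarrow> 'v) \<Rightarrow> ('e \<Rightarrow> 'v) \<Rightarrow> nat \<Rightarrow> (nat \<Rightarrow> 'v) \<Rightarrow> (nat \<Rightarrow> 'v) \<Rightarrow> (nat \<Rightarrow> nat) \<Rightarrow>
     (nat \<Rightarrow> ('v, 'e) walk) set" where
  "walk_families src tgt k a b \<sigma> = (\<Pi>\<^sub>E i\<in>{..<k}. {p. is_walk src tgt (a i) (b (\<sigma> i)) p})"

definition signed_families ::
  "('e \<Rightarrow> 'v) \<Rightarrow> ('e \<Rightarrow> 'v) \<Rightarrow> nat \<Rightarrow> (nat \<Rightarrow> 'v) \<Rightarrow> (nat \<Rightarrow> 'v) \<Rightarrow>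
     ((nat \<Rightarrow> nat) \<times> (nat \<Rightarrow> ('v, 'e) walk)) set" where
  "signed_families src tgt k a b = Sigma {\<sigma>. \<sigma> permutes {..<k}} (walk_families src tgt k a b)"

definition family_mon :: "nat \<Rightarrow> (nat \<Rightarrow> ('v, 'e) walk) \<Rightarrow> 'e multiset" where
  "family_mon k f = (\<Sum>i<k. wmon (f i))"

definition conflict_swap ::
  "nat \<Rightarrow> (nat \<Rightarrow> nat) \<times> (nat \<Rightarrow> ('v, 'e) walk) \<Rightarrow> (nat \<Rightarrow> nat) \<times> (nat \<Rightarrow> ('v, 'e) walk)" where
  "conflict_swap k x =
     (fst x \<circ> transpose (first_conflict k (snd x)) (swap_partner k (snd x)), swap_tails k (snd x))"

lemma walk_families_is_walk:
  "f \<in> walk_families src tgt k a b \<sigma> \<Longrightarrow> m < k \<Longrightarrow> is_walk src tgt (a m) (b (\<sigma> m)) (f m)"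
  by (auto simp: walk_families_def)

lemma swap_tails_walk_families:
  assumes \<sigma>: "\<sigma> permutes {..<k}" and f: "f \<in> walk_families src tgt k a b \<sigma>"
    and conflict: "has_conflict k f"
  shows "swap_tails k f \<in>
           walk_families src tgt k a b (\<sigma> \<circ> transpose (first_conflict k f) (swap_partner k f))"
  unfolding walk_families_def
proof (rule PiE_I)
  fix m assume "m \<in> {..<k}"
  then show "swap_tails k f m \<in>
      {p. is_walk src tgt (a m) (b ((\<sigma> \<circ> transpose (first_conflict k f) (swap_partner k f)) m)) p}"
    using is_walk_swap_tails[of k f src tgt a "b \<circ> \<sigma>"] conflict walk_families_is_walk[OF f] by simp
next
  fix m assume "m \<notin> {..<k}"
  then show "swap_tails k f m = undefined"
    using swap_partner(1,2)[OF conflict] f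
    by (auto simp: swap_tails_other walk_families_def PiE_def extensional_def)
qed

lemma family_mon_swap_tails:
  assumes conflict: "has_conflict k f"
  shows "family_mon k (swap_tails k f) = family_mon k f"
  unfolding family_mon_def
proof (rule sum_swap_pair[of _ "first_conflict k f" "swap_partner k f"])
  show "wmon (swap_tails k f (first_conflict k f)) + wmon (swap_tails k f (swap_partner k f)) =
      wmon (f (first_conflict k f)) + wmon (f (swap_partner k f))"
    using swap_partner(1)[OF conflict] wmon_splice_swap by (simp add: swap_tails_def Let_def)
qed (use swap_partner(1,2)[OF conflict] in \<open>auto simp: swap_tails_other\<close>)

lemma conflict_swap:
  assumes x: "x \<in> signed_families src tgt k a b" and conflict: "has_conflict k (snd x)"
  shows "conflict_swap k x \<in> signed_families src tgt k a b"
    and "has_conflict k (snd (conflict_swap k x))"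
    and "conflict_swap k (conflict_swap k x) = x"
    and "sign (fst (conflict_swap k x)) = - sign (fst x)"
    and "family_mon k (snd (conflict_swap k x)) = family_mon k (snd x)"
proof -
  obtain \<sigma> f where x_eq: "x = (\<sigma>, f)" by (cases x)
  have \<sigma>: "\<sigma> permutes {..<k}" and f: "f \<in> walk_families src tgt k a b \<sigma>"
    and conflict: "has_conflict k f"
    using x conflict by (auto simp: x_eq signed_families_def)
  let ?\<tau> = "transpose (first_conflict k f) (swap_partner k f)"
  note partner = swap_partner[OF conflict] and inv = swap_tails_invariants[OF conflict]
  have swap_eq: "conflict_swap k x = (\<sigma> \<circ> ?\<tau>, swap_tails k f)"
    by (simp add: conflict_swap_def x_eq)
  have \<tau>: "?\<tau> permutes {..<k}"
    using partner(1,2) by (intro permutes_swap_id) auto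
  show "conflict_swap k x \<in> signed_families src tgt k a b"
    using permutes_compose[OF \<tau> \<sigma>] swap_tails_walk_families[OF \<sigma> f conflict]
    by (simp add: swap_eq signed_families_def)
  show "has_conflict k (snd (conflict_swap k x))"
    using inv(1) by (simp add: swap_eq)
  show "conflict_swap k (conflict_swap k x) = x"
    using inv(2,4) swap_tails_involutive[OF conflict]
    by (simp add: conflict_swap_def x_eq comp_assoc)
  have "sign (\<sigma> \<circ> ?\<tau>) = sign \<sigma> * sign ?\<tau>"
    by (rule sign_compose) (use \<sigma> in \<open>auto intro: permutes_imp_permutation permutation_swap_id\<close>)
  then show "sign (fst (conflict_swap k x)) = - sign (fst x)"
    unfolding swap_eq using partner(1) by (simp add: x_eq sign_swap_id)
  show "family_mon k (snd (conflict_swap k x)) = family_mon k (snd x)"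
    unfolding swap_eq using family_mon_swap_tails[OF conflict] by (simp add: x_eq)
qed

section \<open>Crossing endpoints\<close>

definition crossing :: "('e \<Rightarrow> 'v) \<Rightarrow> ('e \<Rightarrow> 'v) \<Rightarrow> nat \<Rightarrow> (nat \<Rightarrow> 'v) \<Rightarrow> (nat \<Rightarrow> 'v) \<Rightarrow> bool" where
  "crossing src tgt k a b \<longleftrightarrow> (\<forall>i i' j j'. i < i' \<and> i' < k \<and> j' < j \<and> j < k \<longrightarrow>
       (\<forall>p q. is_walk src tgt (a i) (b j) p \<and> is_walk src tgt (a i') (b j') q \<longrightarrow>
          set (walk_verts p) \<inter> set (walk_verts q) \<noteq> {}))"

lemma crossingD:
  assumes "crossing src tgt k a b" "i < i'" "i' < k" "j' < j" "j < k"
    and "is_walk src tgt (a i) (b j) p" "is_walk src tgt (a i') (b j') q"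
  shows "set (walk_verts p) \<inter> set (walk_verts q) \<noteq> {}"
  using assms unfolding crossing_def by blast

definition LE_avoiding :: "nat \<Rightarrow> (nat \<Rightarrow> ('v, 'e) walk) \<Rightarrow> bool" where
  "LE_avoiding k f \<longleftrightarrow>
     (\<forall>i. i + 1 < k \<longrightarrow> set (walk_verts (f (i + 1))) \<inter> set (walk_verts (LE (f i))) = {})"

text \<open>A family without conflicts for a permutation \<sigma> that is not the identity would contain
  two consecutive walks whose ends are in the wrong order; by the crossing hypothesis the
  second one would meet the loop erasure of the first.\<close>

lemma no_conflict_imp_id:
  assumes cr: "crossing src tgt k a b" and \<sigma>: "\<sigma> permutes {..<k}"
    and f: "f \<in> walk_families src tgt k a b \<sigma>" and no_conflict: "\<not> has_conflict k f"
  shows "\<sigma> = id"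
proof -
  have ascending: "\<sigma> i < \<sigma> (Suc i)" if "Suc i < k" for i
  proof (rule ccontr)
    have "\<sigma> i \<noteq> \<sigma> (Suc i)" using permutes_inj[OF \<sigma>] by (auto dest: injD)
    moreover assume "\<not> \<sigma> i < \<sigma> (Suc i)"
    ultimately have "\<sigma> (Suc i) < \<sigma> i" by simp
    moreover have "\<sigma> i < k" using permutes_in_image[OF \<sigma>] that by simp
    moreover have "is_walk src tgt (a i) (b (\<sigma> i)) (LE (f i))"
      using that by (intro is_walk_LE walk_families_is_walk[OF f]) simp
    moreover have "is_walk src tgt (a (Suc i)) (b (\<sigma> (Suc i))) (f (Suc i))"
      using that by (intro walk_families_is_walk[OF f])
    ultimately have "set (walk_verts (LE (f i))) \<inter> set (walk_verts (f (Suc i))) \<noteq> {}"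
      using that crossingD[OF cr, where i = i and i' = "Suc i" and j = "\<sigma> i" and j' = "\<sigma> (Suc i)"]
      by simp
    then have "LE_conflict k f i (Suc i)"
      using that by (auto simp: LE_conflict_def)
    then show False using no_conflict by (auto simp: has_conflict_def)
  qed
  have "i \<le> \<sigma> i" if "i < k" for i
    using that
  proof (induction i)
    case (Suc i)
    then show ?case using ascending[of i] by simp
  qed simp
  then show ?thesis
    by (intro permutes_natset_ge[OF \<sigma>]) auto
qed

text \<open>Conflicts propagate towards the diagonal: splicing the loop erasure of walk i with walk j
  at a common vertex yields a walk from a i to b j, which must meet the loop erasure of walk
  i + 1 off the loop erasure of walk i, hence on walk j.\<close>

lemma LE_conflict_Suc:
  assumes cr: "crossing src tgt k a b" and f: "f \<in> walk_families src tgt k a b id"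
    and avoiding: "LE_avoiding k f" and conflict: "LE_conflict k f i j" and "Suc i < j"
  shows "LE_conflict k f (Suc i) j"
proof -
  have j: "j < k" using conflict by (simp add: LE_conflict_def)
  obtain v where v: "v \<in> set (walk_verts (LE (f i)))" "v \<in> set (walk_verts (f j))"
    using conflict by (auto simp: LE_conflict_def)
  define \<alpha> where "\<alpha> = walk_splice (LE (f i)) (f j) (last_visit (LE (f i)) v) (last_visit (f j) v)"
  have P: "is_walk src tgt (a i) (b i) (LE (f i))" and Q: "is_walk src tgt (a j) (b j) (f j)"
    using j \<open>Suc i < j\<close> walk_families_is_walk[OF f] by (simp_all add: is_walk_LE)
  have "is_walk src tgt (a i) (b j) \<alpha>"
    unfolding \<alpha>_def using last_visit[OF v(1)] last_visit[OF v(2)]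
    by (intro is_walk_splice[OF P Q]) auto
  moreover have "is_walk src tgt (a (Suc i)) (b (Suc i)) (LE (f (Suc i)))"
    using j \<open>Suc i < j\<close> by (intro is_walk_LE walk_families_is_walk[OF f, simplified]) simp
  ultimately have "set (walk_verts \<alpha>) \<inter> set (walk_verts (LE (f (Suc i)))) \<noteq> {}"
    using crossingD[OF cr, where i = i and i' = "Suc i" and j = j and j' = "Suc i"] j \<open>Suc i < j\<close>
    by simp
  then obtain x where x: "x \<in> set (walk_verts \<alpha>)" "x \<in> set (walk_verts (LE (f (Suc i))))"
    by blast
  have "set (walk_verts (f (Suc i))) \<inter> set (walk_verts (LE (f i))) = {}"
    using avoiding j \<open>Suc i < j\<close> by (simp add: LE_avoiding_def)
  then have "x \<notin> set (walk_verts (LE (f i)))"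
    using x(2) set_walk_verts_LE[of "f (Suc i)"] by blast
  then have "x \<in> set (walk_verts (f j))"
    using x(1) set_walk_verts_splice[of "LE (f i)" "f j"] unfolding \<alpha>_def by blast
  then show ?thesis
    using x(2) j \<open>Suc i < j\<close> by (auto simp: LE_conflict_def)
qed

lemma LE_avoiding_no_conflict:
  assumes cr: "crossing src tgt k a b" and f: "f \<in> walk_families src tgt k a b id"
    and avoiding: "LE_avoiding k f"
  shows "\<not> has_conflict k f"
proof -
  have "\<not> LE_conflict k f i j" for i j
  proof (induction "j - i" arbitrary: i rule: less_induct)
    case less
    show ?case
    proof
      assume conflict: "LE_conflict k f i j"
      show False
      proof (cases "Suc i < j")
        case True
        then have "\<not> LE_conflict k f (Suc i) j" by (intro less) simp
        then show False using LE_conflict_Suc[OF cr f avoiding conflict True] by contradiction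
      next
        case False
        then have "j = i + 1" using conflict by (simp add: LE_conflict_def)
        then show False using conflict avoiding by (auto simp: LE_conflict_def LE_avoiding_def)
      qed
    qed
  qed
  then show ?thesis by (simp add: has_conflict_def)
qed

lemma signed_families_no_conflict:
  assumes cr: "crossing src tgt k a b"
  shows "{x \<in> signed_families src tgt k a b. \<not> has_conflict k (snd x)} =
           Pair id ` {f \<in> walk_families src tgt k a b id. LE_avoiding k f}"
proof (intro Set.set_eqI iffI)
  fix x assume x: "x \<in> {x \<in> signed_families src tgt k a b. \<not> has_conflict k (snd x)}"
  obtain \<sigma> f where x_eq: "x = (\<sigma>, f)" by (cases x)
  have \<sigma>: "\<sigma> permutes {..<k}" and f: "f \<in> walk_families src tgt k a b \<sigma>"
    and no_conflict: "\<not> has_conflict k f"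
    using x by (auto simp: x_eq signed_families_def)
  have "\<sigma> = id" using no_conflict_imp_id[OF cr \<sigma> f no_conflict] .
  moreover have "LE_avoiding k f"
    using no_conflict by (auto simp: LE_avoiding_def has_conflict_def LE_conflict_def)
  ultimately show "x \<in> Pair (id :: nat \<Rightarrow> nat) ` {f \<in> walk_families src tgt k a b id. LE_avoiding k f}"
    using f by (simp add: x_eq)
next
  fix x assume "x \<in> Pair (id :: nat \<Rightarrow> nat) ` {f \<in> walk_families src tgt k a b id. LE_avoiding k f}"
  then obtain f where "x = (id, f)" "f \<in> walk_families src tgt k a b id" "LE_avoiding k f"
    by blast
  then show "x \<in> {x \<in> signed_families src tgt k a b. \<not> has_conflict k (snd x)}"
    using LE_avoiding_no_conflict[OF cr] by (simp add: signed_families_def permutes_id)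
qed

section \<open>The formal identity\<close>

lemma coeff_zero [simp]: "coeff 0 m = 0"
  and coeff_plus [simp]: "coeff (f + g) m = coeff f m + coeff g m"
  and coeff_uminus [simp]: "coeff (- f) m = - coeff f m"
  by (simp_all add: zero_mfps_def plus_mfps_def uminus_mfps_def)

lemma coeff_sum: "coeff (sum g A) m = (\<Sum>x\<in>A. coeff (g x) m)"
  by (induction A rule: infinite_finite_induct) auto

lemma coeff_sign_mult: "coeff (of_int (sign p) * g) m = sign p * coeff g m"
  by (simp add: sign_def)

lemma coeff_mono_sum [simp]: "coeff (mono_sum S \<mu>) m = int (card {x \<in> S. \<mu> x = m})"
  by (simp add: mono_sum_def)

lemma mono_sum_times:
  assumes "\<And>x. finite {p \<in> S. \<mu> p = x}" and "\<And>x. finite {q \<in> T. \<nu> q = x}"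
  shows "mono_sum S \<mu> * mono_sum T \<nu> = mono_sum (S \<times> T) (\<lambda>(p, q). \<mu> p + \<nu> q)"
proof (rule mfps_eqI)
  fix m
  have "{pq \<in> S \<times> T. (case pq of (p, q) \<Rightarrow> \<mu> p + \<nu> q) = m} =
      (\<Union>x\<in>{x. x \<subseteq># m}. {p \<in> S. \<mu> p = x} \<times> {q \<in> T. \<nu> q = m - x})"
    by (auto simp: subset_mset.add_diff_inverse)
  then have "card {pq \<in> S \<times> T. (case pq of (p, q) \<Rightarrow> \<mu> p + \<nu> q) = m} =
      (\<Sum>x\<in>{x. x \<subseteq># m}. card {p \<in> S. \<mu> p = x} * card {q \<in> T. \<nu> q = m - x})"
    by (simp only: card_cartesian_product[symmetric])
       (rule card_UN_disjoint, use assms finite_submsets in auto)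
  then show "coeff (mono_sum S \<mu> * mono_sum T \<nu>) m = coeff (mono_sum (S \<times> T) (\<lambda>(p, q). \<mu> p + \<nu> q)) m"
    by (simp add: coeff_mult)
qed

lemma mono_sum_bij:
  assumes "bij_betw h S T" "\<And>x. x \<in> S \<Longrightarrow> \<nu> (h x) = \<mu> x"
  shows "mono_sum S \<mu> = mono_sum T \<nu>"
proof (rule mfps_eqI)
  fix m
  have "bij_betw h {x \<in> S. \<mu> x = m} {y \<in> T. \<nu> y = m}"
    using assms unfolding bij_betw_def inj_on_def by auto
  then show "coeff (mono_sum S \<mu>) m = coeff (mono_sum T \<nu>) m"
    by (simp add: bij_betw_same_card)
qed

lemma finite_PiE_fibers:
  fixes \<mu> :: "'a \<Rightarrow> 'b multiset" and n :: nat
  assumes "\<And>i x. i < n \<Longrightarrow> finite {p \<in> S i. \<mu> p = x}"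
  shows "finite {g \<in> (\<Pi>\<^sub>E i\<in>{..<n}. S i). (\<Sum>i<n. \<mu> (g i)) = x}"
proof (rule finite_subset)
  show "{g \<in> (\<Pi>\<^sub>E i\<in>{..<n}. S i). (\<Sum>i<n. \<mu> (g i)) = x} \<subseteq> (\<Pi>\<^sub>E i\<in>{..<n}. {p \<in> S i. \<mu> p \<subseteq># x})"
  proof
    fix g assume g: "g \<in> {g \<in> (\<Pi>\<^sub>E i\<in>{..<n}. S i). (\<Sum>i<n. \<mu> (g i)) = x}"
    have "\<mu> (g i) \<subseteq># x" if "i < n" for i
      using g that by (metis (mono_tags) finite_lessThan lessThan_iff mem_Collect_eq
          mset_subset_eq_add_left sum.remove)
    then show "g \<in> (\<Pi>\<^sub>E i\<in>{..<n}. {p \<in> S i. \<mu> p \<subseteq># x})"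
      using g by (auto simp: PiE_def Pi_def)
  qed
  have "finite {p \<in> S i. \<mu> p \<subseteq># x}" if "i < n" for i
  proof -
    have "{p \<in> S i. \<mu> p \<subseteq># x} = (\<Union>y\<in>{y. y \<subseteq># x}. {p \<in> S i. \<mu> p = y})"
      by auto
    then show ?thesis
      using finite_UN_I[OF finite_submsets assms[OF that]] by simp
  qed
  then show "finite (\<Pi>\<^sub>E i\<in>{..<n}. {p \<in> S i. \<mu> p \<subseteq># x})"
    by (intro finite_PiE) auto
qed

lemma mono_sum_prod:
  fixes n :: nat
  assumes "\<forall>i<n. \<forall>x. finite {p \<in> S i. \<mu> p = x}"
  shows "(\<Prod>i<n. mono_sum (S i) \<mu>) = mono_sum (\<Pi>\<^sub>E i\<in>{..<n}. S i) (\<lambda>g. \<Sum>i<n. \<mu> (g i))"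
  using assms
proof (induction n)
  case 0
  have "{g \<in> (\<Pi>\<^sub>E i\<in>{}. S i). (\<Sum>i<0. \<mu> (g i)) = m} = (if m = {#} then {\<lambda>_. undefined} else {})" for m
    by auto
  then show ?case
    by (intro mfps_eqI) (simp add: one_mfps_def)
next
  case (Suc n)
  have "(\<Prod>i<Suc n. mono_sum (S i) \<mu>) =
      mono_sum (\<Pi>\<^sub>E i\<in>{..<n}. S i) (\<lambda>g. \<Sum>i<n. \<mu> (g i)) * mono_sum (S n) \<mu>"
    using Suc by simp
  also have "\<dots> = mono_sum ((\<Pi>\<^sub>E i\<in>{..<n}. S i) \<times> S n) (\<lambda>(g, y). (\<Sum>i<n. \<mu> (g i)) + \<mu> y)"
    by (rule mono_sum_times) (use finite_PiE_fibers[of n S \<mu>] Suc.prems in simp_all)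
  also have "\<dots> = mono_sum (\<Pi>\<^sub>E i\<in>{..<Suc n}. S i) (\<lambda>g. \<Sum>i<Suc n. \<mu> (g i))"
  proof (rule mono_sum_bij)
    have "bij_betw (\<lambda>(g, y). g(n := y)) ((\<Pi>\<^sub>E i\<in>{..<n}. S i) \<times> S n) (\<Pi>\<^sub>E i\<in>insert n {..<n}. S i)"
      by (rule bij_betwI[where g = "\<lambda>g. (g(n := undefined), g n)"])
         (auto simp: PiE_def Pi_def extensional_def fun_eq_iff)
    then show "bij_betw (\<lambda>(g, y). g(n := y)) ((\<Pi>\<^sub>E i\<in>{..<n}. S i) \<times> S n) (\<Pi>\<^sub>E i\<in>{..<Suc n}. S i)"
      by (simp add: lessThan_Suc)
    have "(\<Sum>i<n. \<mu> ((g(n := y)) i)) = (\<Sum>i<n. \<mu> (g i))" for g y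
      by (rule sum.cong) auto
    then show "(\<Sum>i<Suc n. \<mu> ((case x of (g, y) \<Rightarrow> g(n := y)) i)) = (case x of (g, y) \<Rightarrow> (\<Sum>i<n. \<mu> (g i)) + \<mu> y)"
      for x by (cases x) simp
  qed
  finally show ?case .
qed

lemma finite_walk_fibers: "finite {p. is_walk src tgt x y p \<and> wmon p = m}"
proof (rule finite_subset)
  define A where "A = set_mset m \<times> tgt ` set_mset m"
  show "{p. is_walk src tgt x y p \<and> wmon p = m} \<subseteq> Pair x ` {st. set st \<subseteq> A \<and> length st = size m}"
  proof
    fix p assume p: "p \<in> {p. is_walk src tgt x y p \<and> wmon p = m}"
    then have ok: "steps_ok src tgt x (snd p)" and mon: "mset (map fst (snd p)) = m"
      by (auto simp: is_walk_def wmon_def)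
    have "set (snd p) \<subseteq> A"
      using mon steps_ok_tgt[OF ok] by (force simp: A_def)
    moreover have "length (snd p) = size m" using mon by (metis length_map size_mset)
    ultimately show "p \<in> Pair x ` {st. set st \<subseteq> A \<and> length st = size m}"
      using p by (intro image_eqI[where x = "snd p"]) (auto simp: is_walk_def)
  qed
  show "finite (Pair x ` {st. set st \<subseteq> A \<and> length st = size m})"
    by (intro finite_imageI finite_lists_length_eq) (simp add: A_def)
qed

lemma finite_walk_families_fibers: "finite {f \<in> walk_families src tgt k a b \<sigma>. family_mon k f = m}"
  unfolding walk_families_def family_mon_def
  by (rule finite_PiE_fibers) (use finite_walk_fibers in simp)

lemma det_walk_matrix:
  "det (mat k k (\<lambda>(i, j). walk_series src tgt (a i) (b j))) =
     (\<Sum>\<sigma> | \<sigma> permutes {..<k}. of_int (sign \<sigma>) * mono_sum (walk_families src tgt k a b \<sigma>) (family_mon k))"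
proof -
  have "(\<Prod>i<k. walk_series src tgt (a i) (b (\<sigma> i))) = mono_sum (walk_families src tgt k a b \<sigma>) (family_mon k)"
    for \<sigma>
    unfolding walk_series_def walk_families_def family_mon_def
    by (rule mono_sum_prod) (simp add: finite_walk_fibers)
  moreover have "\<sigma> i < k" if "\<sigma> permutes {..<k}" "i < k" for \<sigma> i
    using permutes_in_image[OF that(1)] that(2) by simp
  ultimately show ?thesis
    unfolding det_def by (auto simp: atLeast0LessThan intro!: sum.cong)
qed

lemma coeff_det_walk_matrix:
  "coeff (det (mat k k (\<lambda>(i, j). walk_series src tgt (a i) (b j)))) m =
     (\<Sum>x\<in>{x \<in> signed_families src tgt k a b. family_mon k (snd x) = m}. sign (fst x))"
proof -
  have "finite {\<sigma>. \<sigma> permutes {..<k}}" by (rule finite_permutations) simp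
  then have "(\<Sum>\<sigma> | \<sigma> permutes {..<k}. \<Sum>f\<in>{f \<in> walk_families src tgt k a b \<sigma>. family_mon k f = m}. sign \<sigma>) =
      (\<Sum>x\<in>{x \<in> signed_families src tgt k a b. family_mon k (snd x) = m}. sign (fst x))"
    by (subst sum.Sigma) (auto simp: finite_walk_families_fibers signed_families_def split_beta
        intro!: sum.cong)
  then show ?thesis
    by (simp add: det_walk_matrix coeff_sum coeff_sign_mult mult.commute)
qed

lemma det_walk_matrix_LE_avoiding:
  assumes cr: "crossing src tgt k a b"
  shows "det (mat k k (\<lambda>(i, j). walk_series src tgt (a i) (b j))) =
           mono_sum {f \<in> walk_families src tgt k a b id. LE_avoiding k f} (family_mon k)"
proof (rule mfps_eqI)
  fix m
  define X where "X = {x \<in> signed_families src tgt k a b. family_mon k (snd x) = m}"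
  define G where "G = {f \<in> {f \<in> walk_families src tgt k a b id. LE_avoiding k f}. family_mon k f = m}"
  have "X \<subseteq> Sigma {\<sigma>. \<sigma> permutes {..<k}} (\<lambda>\<sigma>. {f \<in> walk_families src tgt k a b \<sigma>. family_mon k f = m})"
    by (auto simp: X_def signed_families_def)
  then have "finite X"
    by (rule finite_subset) (simp add: finite_permutations finite_walk_families_fibers)
  then have split: "(\<Sum>x\<in>X. sign (fst x)) =
      (\<Sum>x\<in>{x\<in>X. has_conflict k (snd x)}. sign (fst x)) + (\<Sum>x\<in>{x\<in>X. \<not> has_conflict k (snd x)}. sign (fst x))"
    by (subst sum.union_disjoint[symmetric]) (auto intro: sum.cong)
  have cancel: "(\<Sum>x\<in>{x\<in>X. has_conflict k (snd x)}. sign (fst x)) = 0"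
  proof (rule sum_involution_eq_0[where h = "conflict_swap k"])
    fix x assume x: "x \<in> {x\<in>X. has_conflict k (snd x)}"
    then have x': "x \<in> signed_families src tgt k a b" "has_conflict k (snd x)"
      by (auto simp: X_def)
    note swap = conflict_swap[OF x']
    show "sign (fst (conflict_swap k x)) + sign (fst x) = 0" using swap(4) by simp
    show "conflict_swap k x \<in> {x\<in>X. has_conflict k (snd x)}" using swap(1,2,5) x by (simp add: X_def)
    show "conflict_swap k (conflict_swap k x) = x" by (rule swap(3))
    show "conflict_swap k x \<noteq> x"
    proof
      assume "conflict_swap k x = x"
      with swap(4) show False by (simp add: sign_def split: if_splits)
    qed
  qed
  have "{x\<in>X. \<not> has_conflict k (snd x)} =
      {x \<in> {x \<in> signed_families src tgt k a b. \<not> has_conflict k (snd x)}. family_mon k (snd x) = m}"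
    by (auto simp: X_def)
  then have survivors: "{x\<in>X. \<not> has_conflict k (snd x)} = Pair id ` G"
    unfolding signed_families_no_conflict[OF cr] G_def by auto
  have "(\<Sum>x\<in>Pair id ` G. sign (fst x)) = int (card G)"
    by (subst sum.reindex) (auto simp: inj_on_def sign_id)
  with split cancel survivors show "coeff (det (mat k k (\<lambda>(i, j). walk_series src tgt (a i) (b j)))) m =
      coeff (mono_sum {f \<in> walk_families src tgt k a b id. LE_avoiding k f} (family_mon k)) m"
    unfolding coeff_det_walk_matrix coeff_mono_sum X_def[symmetric] G_def[symmetric] by simp
qed

lemma mono_sum_walk_lists:
  "mono_sum {ps. length ps = k \<and> (\<forall>i<k. is_walk src tgt (a i) (b i) (ps ! i)) \<and>
                 (\<forall>i. i + 1 < k \<longrightarrow> set (walk_verts (ps ! (i + 1))) \<inter> set (walk_verts (LE (ps ! i))) = {})}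
            (\<lambda>ps. sum_list (map wmon ps)) =
   mono_sum {f \<in> walk_families src tgt k a b id. LE_avoiding k f} (family_mon k)"
proof (rule mono_sum_bij[symmetric])
  show "bij_betw (\<lambda>f. map f [0..<k]) {f \<in> walk_families src tgt k a b id. LE_avoiding k f}
      {ps. length ps = k \<and> (\<forall>i<k. is_walk src tgt (a i) (b i) (ps ! i)) \<and>
           (\<forall>i. i + 1 < k \<longrightarrow> set (walk_verts (ps ! (i + 1))) \<inter> set (walk_verts (LE (ps ! i))) = {})}"
    by (rule bij_betwI[where g = "\<lambda>ps i. if i < k then ps ! i else undefined"])
       (auto simp: walk_families_def LE_avoiding_def PiE_def extensional_def fun_eq_iff disjoint_iff
         intro!: nth_equalityI)
  show "sum_list (map wmon (map f [0..<k])) = family_mon k f" for f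
    by (simp add: family_mon_def sum_list_sum_nth atLeast0LessThan)
qed

section \<open>Total nonnegativity for nonnegative real weights\<close>

lemma walk_rweight_eq: "walk_rweight r p = prod_mset (image_mset r (wmon p))"
  unfolding walk_rweight_def wmon_def by (simp only: mset_map[symmetric] prod_mset_prod_list map_map)

lemma walk_rweight_nonneg: "(\<And>e. r e \<ge> 0) \<Longrightarrow> walk_rweight r p \<ge> (0::real)"
  unfolding walk_rweight_def by (rule prod_list_nonneg) auto

lemma prod_walk_rweight: "(\<Prod>i<n. walk_rweight r (f i)) = prod_mset (image_mset r (family_mon n f))"
  by (induction n) (simp_all add: family_mon_def walk_rweight_eq mult.commute)

lemma summable_on_prod_PiE_nonneg:
  fixes f :: "'a \<Rightarrow> 'b \<Rightarrow> real"
  assumes "finite A" "\<And>x y. 0 \<le> f x y" "\<And>x. x \<in> A \<Longrightarrow> f x summable_on B x"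
  shows "(\<lambda>g. \<Prod>x\<in>A. f x (g x)) summable_on (\<Pi>\<^sub>E x\<in>A. B x)"
  using assms(1,3)
proof (induction A rule: finite_induct)
  case (insert x F)
  define P where "P g = (\<Prod>x'\<in>F. f x' (g x'))" for g
  have P_nonneg: "P g \<ge> 0" for g unfolding P_def by (rule prod_nonneg) (use assms(2) in auto)
  have P_sum: "P summable_on (\<Pi>\<^sub>E x\<in>F. B x)" unfolding P_def using insert by simp
  have fx_sum: "f x summable_on B x" using insert.prems by simp
  have "(\<lambda>(g, y). f x y * P g) abs_summable_on (\<Pi>\<^sub>E x\<in>F. B x) \<times> B x"
  proof (subst abs_summable_on_Sigma_iff, intro conjI ballI)
    show "(\<lambda>y. norm ((\<lambda>(g, y). f x y * P g) (g, y))) summable_on B x" for g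
      using summable_on_cmult_left[OF fx_sum, of "P g"] by (simp add: abs_mult assms(2) P_nonneg)
    have "(\<lambda>g. infsum (f x) (B x) * P g) summable_on (\<Pi>\<^sub>E x\<in>F. B x)"
      by (rule summable_on_cmult_right[OF P_sum])
    moreover have "infsum (\<lambda>y. norm (f x y * P g)) (B x) = infsum (f x) (B x) * P g" for g
      using infsum_cmult_left[OF fx_sum, of "P g"] by (simp add: abs_mult assms(2) P_nonneg)
    ultimately show "(\<lambda>g. infsum (\<lambda>y. norm ((\<lambda>(g, y). f x y * P g) (g, y))) (B x))
        abs_summable_on (\<Pi>\<^sub>E x\<in>F. B x)"
      using infsum_nonneg[of "B x" "f x"] assms(2) P_nonneg by (simp add: abs_mult)
  qed
  then have "(\<lambda>(g, y). f x y * P g) summable_on (\<Pi>\<^sub>E x\<in>F. B x) \<times> B x"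
    by (rule abs_summable_summable)
  moreover have "(\<Prod>z\<in>insert x F. f z ((g(x := y)) z)) = f x y * P g" for g y
  proof -
    have "(\<Prod>x'\<in>F. f x' ((g(x := y)) x')) = P g"
      unfolding P_def using insert.hyps(2) by (intro prod.cong) auto
    then show ?thesis using insert.hyps by simp
  qed
  ultimately have "((\<lambda>g. \<Prod>x\<in>insert x F. f x (g x)) \<circ> (\<lambda>(g, y). g(x := y)))
      summable_on (\<Pi>\<^sub>E x\<in>F. B x) \<times> B x"
    by (simp add: comp_def case_prod_unfold)
  moreover have "(\<Pi>\<^sub>E x\<in>insert x F. B x) = (\<lambda>(g, y). g(x := y)) ` ((\<Pi>\<^sub>E x\<in>F. B x) \<times> B x)"
    unfolding PiE_insert_eq by (subst swap_product [symmetric]) (simp add: image_image case_prod_unfold)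
  ultimately show ?case
    by (simp only: summable_on_reindex[OF inj_combinator'[OF insert.hyps(2)]])
qed simp

lemma infsum_involution_eq_0:
  fixes H :: "'a \<Rightarrow> real"
  assumes "\<And>x. x \<in> A \<Longrightarrow> h x \<in> A" "\<And>x. x \<in> A \<Longrightarrow> h (h x) = x"
    and "\<And>x. x \<in> A \<Longrightarrow> H (h x) = - H x"
  shows "infsum H A = 0"
proof -
  have "bij_betw h A A"
    by (rule bij_betw_byWitness[where f' = h]) (use assms in auto)
  then have "infsum H A = infsum (\<lambda>x. H (h x)) A"
    by (rule infsum_reindex_bij_betw[symmetric])
  also have "\<dots> = - infsum H A"
    using assms(3) by (simp add: infsum_uminus cong: infsum_cong)
  finally show ?thesis by simp
qed

definition family_rweight :: "('e \<Rightarrow> real) \<Rightarrow> nat \<Rightarrow> (nat \<Rightarrow> ('v, 'e) walk) \<Rightarrow> real" where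
  "family_rweight r k f = (\<Prod>i<k. walk_rweight r (f i))"

lemma family_rweight_nonneg: "(\<And>e. r e \<ge> 0) \<Longrightarrow> family_rweight r k f \<ge> 0"
  unfolding family_rweight_def by (intro prod_nonneg walk_rweight_nonneg) auto

lemma summable_family_rweight:
  assumes r: "\<And>e. r e \<ge> 0" and \<sigma>: "\<sigma> permutes {..<k}"
    and summable: "\<And>i j. i < k \<Longrightarrow> j < k \<Longrightarrow> walk_rweight r summable_on {p. is_walk src tgt (a i) (b j) p}"
  shows "family_rweight r k summable_on walk_families src tgt k a b \<sigma>"
  unfolding family_rweight_def walk_families_def
  using r summable permutes_in_image[OF \<sigma>]
  by (intro summable_on_prod_PiE_nonneg walk_rweight_nonneg) auto

lemma det_real_walk_matrix:
  fixes r :: "'e \<Rightarrow> real" and src tgt :: "'e \<Rightarrow> 'v"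
  assumes r: "\<And>e. r e \<ge> 0"
    and summable: "\<And>i j. i < k \<Longrightarrow> j < k \<Longrightarrow> walk_rweight r summable_on {p. is_walk src tgt (a i) (b j) p}"
  defines "H \<equiv> \<lambda>x. of_int (sign (fst x)) * family_rweight r k (snd x)"
  shows "H summable_on signed_families src tgt k a b"
    and "det (mat k k (\<lambda>(i, j). infsum (walk_rweight r) {p. is_walk src tgt (a i) (b j) p})) =
           infsum H (signed_families src tgt k a b)"
proof -
  let ?P = "{\<sigma>. \<sigma> permutes {..<k}}"
  have finite: "finite ?P" by (rule finite_permutations) simp
  have fam_summable: "family_rweight r k summable_on walk_families src tgt k a b \<sigma>"
    if "\<sigma> permutes {..<k}" for \<sigma>
    using r that summable by (rule summable_family_rweight)
  have rw_nonneg: "walk_rweight r p \<ge> 0" for p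
    using r by (rule walk_rweight_nonneg)
  have nonneg: "family_rweight r k f \<ge> 0" for f
    using r by (rule family_rweight_nonneg)
  have "H abs_summable_on Sigma ?P (walk_families src tgt k a b)"
    unfolding abs_summable_on_Sigma_iff
    using fam_summable finite by (auto simp: H_def abs_mult sign_def abs_of_nonneg[OF nonneg])
  then show H_summable: "H summable_on signed_families src tgt k a b"
    unfolding signed_families_def by (rule abs_summable_summable)
  have "(\<Prod>i<k. infsum (walk_rweight r) {p. is_walk src tgt (a i) (b (\<sigma> i)) p}) =
      infsum (family_rweight r k) (walk_families src tgt k a b \<sigma>)" if "\<sigma> permutes {..<k}" for \<sigma>
    unfolding family_rweight_def walk_families_def
    using summable permutes_in_image[OF that]
    by (subst infsum_prod_PiE_abs) (auto simp: abs_of_nonneg[OF rw_nonneg])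
  moreover have "\<sigma> i < k" if "\<sigma> permutes {..<k}" "i < k" for \<sigma> i
    using permutes_in_image[OF that(1)] that(2) by simp
  ultimately have "det (mat k k (\<lambda>(i, j). infsum (walk_rweight r) {p. is_walk src tgt (a i) (b j) p})) =
      (\<Sum>\<sigma>\<in>?P. infsum (\<lambda>f. H (\<sigma>, f)) (walk_families src tgt k a b \<sigma>))"
    unfolding det_def H_def using fam_summable
    by (auto simp: atLeast0LessThan infsum_cmult_right intro!: sum.cong)
  also have "\<dots> = infsum H (signed_families src tgt k a b)"
    using infsum_Sigma_banach[OF H_summable[unfolded signed_families_def]] finite
    by (simp add: signed_families_def)
  finally show "det (mat k k (\<lambda>(i, j). infsum (walk_rweight r) {p. is_walk src tgt (a i) (b j) p})) =
      infsum H (signed_families src tgt k a b)" .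
qed

lemma det_real_walk_matrix_nonneg:
  fixes r :: "'e \<Rightarrow> real" and src tgt :: "'e \<Rightarrow> 'v"
  assumes cr: "crossing src tgt k a b" and r: "\<And>e. r e \<ge> 0"
    and summable: "\<And>i j. i < k \<Longrightarrow> j < k \<Longrightarrow> walk_rweight r summable_on {p. is_walk src tgt (a i) (b j) p}"
  shows "det (mat k k (\<lambda>(i, j). infsum (walk_rweight r) {p. is_walk src tgt (a i) (b j) p})) \<ge> 0"
proof -
  define H where "H x = of_int (sign (fst x)) * family_rweight r k (snd x)"
    for x :: "(nat \<Rightarrow> nat) \<times> (nat \<Rightarrow> ('v, 'e) walk)"
  let ?S = "signed_families src tgt k a b"
  have det: "H summable_on ?S"
    "det (mat k k (\<lambda>(i, j). infsum (walk_rweight r) {p. is_walk src tgt (a i) (b j) p})) = infsum H ?S"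
    using det_real_walk_matrix[of r k src tgt a b] r summable unfolding H_def by blast+
  have "infsum H ({x \<in> ?S. has_conflict k (snd x)} \<union> {x \<in> ?S. \<not> has_conflict k (snd x)}) =
      infsum H {x \<in> ?S. has_conflict k (snd x)} + infsum H {x \<in> ?S. \<not> has_conflict k (snd x)}"
    by (rule infsum_Un_disjoint) (auto intro: summable_on_subset_banach[OF det(1)])
  moreover have "{x \<in> ?S. has_conflict k (snd x)} \<union> {x \<in> ?S. \<not> has_conflict k (snd x)} = ?S"
    by auto
  ultimately have "infsum H ?S =
      infsum H {x \<in> ?S. has_conflict k (snd x)} + infsum H {x \<in> ?S. \<not> has_conflict k (snd x)}"
    by simp
  also have "infsum H {x \<in> ?S. has_conflict k (snd x)} = 0"
  proof (rule infsum_involution_eq_0[where h = "conflict_swap k"])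
    fix x assume "x \<in> {x \<in> ?S. has_conflict k (snd x)}"
    then have "x \<in> ?S" "has_conflict k (snd x)" by auto
    note swap = conflict_swap[OF this]
    show "conflict_swap k x \<in> {x \<in> ?S. has_conflict k (snd x)}" using swap(1,2) by simp
    show "conflict_swap k (conflict_swap k x) = x" by (rule swap(3))
    show "H (conflict_swap k x) = - H x"
      using swap(4,5) by (simp add: H_def family_rweight_def prod_walk_rweight)
  qed
  also have "{x \<in> ?S. \<not> has_conflict k (snd x)} = Pair id ` {f \<in> walk_families src tgt k a b id. LE_avoiding k f}"
    by (rule signed_families_no_conflict[OF cr])
  also have "infsum H \<dots> = infsum (family_rweight r k) {f \<in> walk_families src tgt k a b id. LE_avoiding k f}"
    by (subst infsum_reindex) (auto simp: inj_on_def H_def comp_def sign_id)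
  finally have "infsum H ?S = infsum (family_rweight r k) {f \<in> walk_families src tgt k a b id. LE_avoiding k f}"
    by simp
  moreover have "infsum (family_rweight r k) {f \<in> walk_families src tgt k a b id. LE_avoiding k f} \<ge> 0"
    using r by (intro infsum_nonneg family_rweight_nonneg)
  ultimately show ?thesis
    using det(2) by simp
qed

lemma crossing_pick:
  assumes cr: "crossing src tgt k a b" and I: "I \<subseteq> {..<k}" "card I = n" and J: "J \<subseteq> {..<k}" "card J = n"
  shows "crossing src tgt n (\<lambda>i. a (pick I i)) (\<lambda>j. b (pick J j))"
  unfolding crossing_def
proof (intro allI impI)
  fix i i' j j' p q
  assume ij: "i < i' \<and> i' < n \<and> j' < j \<and> j < n"
    and walks: "is_walk src tgt (a (pick I i)) (b (pick J j)) p \<and> is_walk src tgt (a (pick I i')) (b (pick J j')) q"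
  have "pick I i < pick I i'" "pick J j' < pick J j"
    using ij I(2) J(2) by (auto intro: pick_mono_le)
  moreover have "pick I i' < k" "pick J j < k"
    using ij I J pick_in_set_le[of i' I] pick_in_set_le[of j J] by auto
  ultimately show "set (walk_verts p) \<inter> set (walk_verts q) \<noteq> {}"
    using walks crossingD[OF cr, where i = "pick I i" and i' = "pick I i'" and j = "pick J j" and j' = "pick J j'"]
    by simp
qed

lemma submatrix_mat_pick:
  assumes "I \<subseteq> {..<k}" "J \<subseteq> {..<k}" "card I = card J"
  shows "submatrix (mat k k f) I J = mat (card I) (card I) (\<lambda>(i, j). f (pick I i, pick J j))"
proof -
  have "{i. i < k \<and> i \<in> I} = I" "{j. j < k \<and> j \<in> J} = J" using assms(1,2) by auto
  moreover have "pick I i < k" "pick J j < k" if "i < card I" "j < card I" for i j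
    using assms that pick_in_set_le[of i I] pick_in_set_le[of j J] by auto
  ultimately show ?thesis
    using assms(3) by (auto simp: submatrix_def intro!: eq_matI)
qed

lemma totally_nonneg_real_walk_matrix:
  fixes r :: "'e \<Rightarrow> real" and src tgt :: "'e \<Rightarrow> 'v"
  assumes cr: "crossing src tgt k a b" and r: "\<forall>e. r e \<ge> 0"
    and summable: "\<forall>i<k. \<forall>j<k. walk_rweight r summable_on {p. is_walk src tgt (a i) (b j) p}"
  shows "totally_nonneg (mat k k (\<lambda>(i, j). infsum (walk_rweight r) {p. is_walk src tgt (a i) (b j) p}))"
  unfolding totally_nonneg_def
proof (intro allI impI)
  fix I J
  assume "I \<subseteq> {..<dim_row (mat k k (\<lambda>(i, j). infsum (walk_rweight r) {p. is_walk src tgt (a i) (b j) p}))}"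
    and "J \<subseteq> {..<dim_col (mat k k (\<lambda>(i, j). infsum (walk_rweight r) {p. is_walk src tgt (a i) (b j) p}))}"
    and card: "card I = card J"
  then have I: "I \<subseteq> {..<k}" and J: "J \<subseteq> {..<k}" by auto
  have "pick I i < k" "pick J i < k" if "i < card I" for i
    using I J card that pick_in_set_le[of i I] pick_in_set_le[of i J] by auto
  moreover have "crossing src tgt (card I) (\<lambda>i. a (pick I i)) (\<lambda>j. b (pick J j))"
    using I J card by (intro crossing_pick[OF cr]) simp_all
  ultimately have "0 \<le> det (mat (card I) (card I)
      (\<lambda>(i, j). infsum (walk_rweight r) {p. is_walk src tgt (a (pick I i)) (b (pick J j)) p}))"
    using r summable by (intro det_real_walk_matrix_nonneg) simp_all
  then show "det (submatrix (mat k k (\<lambda>(i, j). infsum (walk_rweight r) {p. is_walk src tgt (a i) (b j) p})) I J) \<ge> 0"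
    using I J card by (simp add: submatrix_mat_pick)
qed

theorem theorem6p4:
  fixes src tgt :: "'e \<Rightarrow> 'v" and k :: nat and a b :: "nat \<Rightarrow> 'v"
  assumes countable_walks:
    "\<forall>x y n. countable {p. is_walk src tgt x y p \<and> length (snd p) = n}"
  assumes crossing:
    "\<forall>i i' j j'. i < i' \<and> i' < k \<and> j' < j \<and> j < k \<longrightarrow>
       (\<forall>p q. is_walk src tgt (a i) (b j) p \<and> is_walk src tgt (a i') (b j') q \<longrightarrow>
          set (walk_verts p) \<inter> set (walk_verts q) \<noteq> {})"
  shows "(det (mat k k (\<lambda>(i, j). walk_series src tgt (a i) (b j))) =
           mono_sum {ps. length ps = k \<and> (\<forall>i<k. is_walk src tgt (a i) (b i) (ps ! i)) \<and>
                          (\<forall>i. i + 1 < k \<longrightarrow>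
                               set (walk_verts (ps ! (i + 1))) \<inter> set (walk_verts (LE (ps ! i))) = {})}
                    (\<lambda>ps. sum_list (map wmon ps))) \<and>
         (\<forall>r :: 'e \<Rightarrow> real. (\<forall>e. r e \<ge> 0) \<and>
           (\<forall>i<k. \<forall>j<k. walk_rweight r summable_on {p. is_walk src tgt (a i) (b j) p}) \<longrightarrow>
           totally_nonneg (mat k k (\<lambda>(i, j). infsum (walk_rweight r) {p. is_walk src tgt (a i) (b j) p})))"
proof -
  have cr: "crossing src tgt k a b" unfolding crossing_def by (rule crossing)
  show ?thesis
    unfolding mono_sum_walk_lists
    using det_walk_matrix_LE_avoiding[OF cr] totally_nonneg_real_walk_matrix[OF cr] by blast
qed


end
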